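(* Let $d\ge2$, $A\in[0,\infty)^d$ with $A_d=0$, $D=d+\sum_iA_i$, $x^A=\prod_i|x_i|^{A_i}$, $\mathbb{R}^d_*=\{x:x_i>0\text{ whenever }A_i>0\}$, and let $a,b$ satisfy $0\le b-a<1$, $a<\frac{D-2}{2}$; put $p=\frac{2D}{D-2+2(b-a)}$, $n=\frac{2p}{p-2}$, $\alpha=1+a-\frac{bp}{2}$, $\varphi(x)=\frac{1+|x|^{2\alpha}}{2}$, $d\mu_S=\varphi^{-n}|x|^{-bp}x^A\,dx$ on $\mathbb{R}^d_*$, $\Gamma_S(h,f)=\varphi^2|x|^{2(1-\alpha)}\nabla h\cdot\nabla f$, $\Gamma_S(f)=\Gamma_S(f,f)$, $L_Sf=\varphi^{n}|x|^{bp}x^{-A}\,\mathrm{div}(\varphi^{2-n}|x|^{2(1-\alpha)-bp}x^A\nabla f)$. Let $\mathcal A_0=C^\infty_c(\overline{\mathbb{R}^d_*}\setminus\{0\})$, $L^2(S)=L^2(\mathbb{R}^d_*,\mu_S)$, and let $H^1_0(S)$ be the closure of $\mathcal A_0$ with respect to the norm $\|u\|_{H^1_0(S)}=\left(\int u^2d\mu_S+\int\Gamma_S(u)d\mu_S\right)^{1/2}$. If $n>2$, then the constant function $\mathbf 1$ belongs to $H^1_0(S)$ and $\Gamma_S(\mathbf 1)=0$. Moreover, if $n>4$, there exists a sequence $\zeta_k\in\mathcal A_0$ with $\zeta_k\to\mathbf 1$ in $H^1_0(S)$ and $L_S\zeta_k\to0$ in $L^2(S)$.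
   Context: $x^{-A}=1/x^A$ on $\mathbb{R}^d_*$. The measure $\mu_S$ is finite under the stated hypotheses. *)

theory Defs
  imports "HOL-Analysis.Analysis"
begin

definition Rstar :: "real^'n \<Rightarrow> (real^'n) set" where
  "Rstar A = {x. \<forall>i. 0 < A$i \<longrightarrow> 0 < x$i}"

text \<open>x^A = prod |x_i|^(A_i), with the convention t^0 = 1 (Isabelle has 0 powr 0 = 0).\<close>
definition xpow :: "real^'n \<Rightarrow> real^'n \<Rightarrow> real" where
  "xpow A x = (\<Prod>i\<in>UNIV. if A$i = 0 then 1 else \<bar>x$i\<bar> powr (A$i))"

definition DD :: "real^'n \<Rightarrow> real" where
  "DD A = real CARD('n) + (\<Sum>i\<in>UNIV. A$i)"

definition pS :: "real^'n \<Rightarrow> real \<Rightarrow> real \<Rightarrow> real" where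
  "pS A a b = 2 * DD A / (DD A - 2 + 2 * (b - a))"

definition nS :: "real^'n \<Rightarrow> real \<Rightarrow> real \<Rightarrow> real" where
  "nS A a b = 2 * pS A a b / (pS A a b - 2)"

definition alphaS :: "real^'n \<Rightarrow> real \<Rightarrow> real \<Rightarrow> real" where
  "alphaS A a b = 1 + a - b * pS A a b / 2"

definition phiS :: "real^'n \<Rightarrow> real \<Rightarrow> real \<Rightarrow> real^'n \<Rightarrow> real" where
  "phiS A a b x = (1 + norm x powr (2 * alphaS A a b)) / 2"

definition muS :: "real^'n \<Rightarrow> real \<Rightarrow> real \<Rightarrow> (real^'n) measure" where
  "muS A a b = density lebesgue (\<lambda>x. ennreal (indicator (Rstar A) x
      * phiS A a b x powr (- nS A a b) * norm x powr (- b * pS A a b) * xpow A x))"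

definition pderiv :: "'n \<Rightarrow> (real^'n \<Rightarrow> real) \<Rightarrow> real^'n \<Rightarrow> real" where
  "pderiv i f x = frechet_derivative f (at x) (axis i 1)"

fun pderivs :: "'n list \<Rightarrow> (real^'n \<Rightarrow> real) \<Rightarrow> real^'n \<Rightarrow> real" where
  "pderivs [] f = f"
| "pderivs (i # is) f = pderiv i (pderivs is f)"

definition smooth_fun :: "(real^'n \<Rightarrow> real) \<Rightarrow> bool" where
  "smooth_fun f \<longleftrightarrow> (\<forall>is x. pderivs is f differentiable (at x))"

text \<open>A_0 = C_c^infinity(closure(R^d_*) minus {0}), realised as (restrictions of) smooth
  functions on R^d whose support is compact and avoids the origin.\<close>
definition A0 :: "(real^'n \<Rightarrow> real) set" where
  "A0 = {f. smooth_fun f \<and> compact (closure {x. f x \<noteq> 0}) \<and> 0 \<notin> closure {x. f x \<noteq> 0}}"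

definition GammaS :: "real^'n \<Rightarrow> real \<Rightarrow> real \<Rightarrow> (real^'n \<Rightarrow> real) \<Rightarrow> (real^'n \<Rightarrow> real)
    \<Rightarrow> real^'n \<Rightarrow> real" where
  "GammaS A a b h f x = (phiS A a b x)^2 * norm x powr (2 * (1 - alphaS A a b))
      * (\<Sum>i\<in>UNIV. pderiv i h x * pderiv i f x)"

definition LS :: "real^'n \<Rightarrow> real \<Rightarrow> real \<Rightarrow> (real^'n \<Rightarrow> real) \<Rightarrow> real^'n \<Rightarrow> real" where
  "LS A a b f x = phiS A a b x powr (nS A a b) * norm x powr (b * pS A a b) / xpow A x
     * (\<Sum>i\<in>UNIV. pderiv i (\<lambda>y. phiS A a b y powr (2 - nS A a b)
            * norm y powr (2 * (1 - alphaS A a b) - b * pS A a b) * xpow A y * pderiv i f y) x)"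

definition H1sq :: "real^'n \<Rightarrow> real \<Rightarrow> real \<Rightarrow> (real^'n \<Rightarrow> real) \<Rightarrow> ennreal" where
  "H1sq A a b u = (\<integral>\<^sup>+ x. ennreal ((u x)^2 + GammaS A a b u u x) \<partial>muS A a b)"

text \<open>u lies in H^1_0(S) = closure of A_0 (for u smooth, so that the norm makes sense).\<close>
definition H10 :: "real^'n \<Rightarrow> real \<Rightarrow> real \<Rightarrow> (real^'n \<Rightarrow> real) \<Rightarrow> bool" where
  "H10 A a b u \<longleftrightarrow> (\<exists>\<zeta>. (\<forall>k. \<zeta> k \<in> A0) \<and> (\<lambda>k. H1sq A a b (\<lambda>x. \<zeta> k x - u x)) \<longlonglongrightarrow> 0)"

end

(*
  The constant 1 is approximated by radial cut-offs zeta_k(x) = h_c(|x|^2) with c = k + 1, where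
  h_c(s) = eta(c s - 1) * e * eta(1 - s/c) and eta(t) = exp(-1/t) for t > 0, eta(t) = 0 otherwise.
  The profile h_c is smooth, vanishes unless 1/c < s < c, tends to 1 as c grows, and s h_c' and
  s^2 h_c'' are bounded uniformly in c and tend to 0 pointwise.

  On radial functions, Gamma_S(h(|x|^2)) = 4 theta (|x|^2 h')^2 and
  L_S h(|x|^2) = theta (2 |x|^2 h' (kappa + d) + 4 |x|^4 h''), where theta = phi^2 |x|^(-2 alpha) and
  kappa = x . grad log W is bounded (W is the weight inside the divergence defining L_S).

  The density of mu_S times theta^m is dominated by a power of |x| that is integrable near 0 and
  near infinity exactly when 2m < n, because alpha n = D - b p. Dominated convergence with m <= 1
  gives the H^1_0(S) statement for n > 2, and with m = 2 the statement about L_S for n > 4.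
*)
theory Submission
  imports Defs "HOL-Real_Asymp.Real_Asymp"
begin

section \<open>Smooth functions built from exp(-1/t)\<close>

definition exp_flat :: "(real \<Rightarrow> real) \<Rightarrow> real \<Rightarrow> real" where
  "exp_flat p t = (if 0 < t then p (1/t) * exp (-(1/t)) else 0)"

inductive polyfun :: "(real \<Rightarrow> real) \<Rightarrow> bool" where
  polyfun_const: "polyfun (\<lambda>u. c)"
| polyfun_add: "polyfun p \<Longrightarrow> polyfun q \<Longrightarrow> polyfun (\<lambda>u. p u + q u)"
| polyfun_mult_id: "polyfun p \<Longrightarrow> polyfun (\<lambda>u. u * p u)"

lemma polyfun_cmult: "polyfun p \<Longrightarrow> polyfun (\<lambda>u. c * p u)"
proof (induction rule: polyfun.induct)
  case (polyfun_const d)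
  show ?case using polyfun.polyfun_const[of "c * d"] .
next
  case (polyfun_add p q)
  then show ?case using polyfun.polyfun_add[of "\<lambda>u. c * p u" "\<lambda>u. c * q u"]
    by (simp add: distrib_left)
next
  case (polyfun_mult_id p)
  then show ?case using polyfun.polyfun_mult_id[of "\<lambda>u. c * p u"]
    by (simp add: mult.left_commute)
qed

lemma polyfun_has_real_derivative:
  "polyfun p \<Longrightarrow> \<exists>p'. polyfun p' \<and> (\<forall>u. (p has_real_derivative p' u) (at u))"
proof (induction rule: polyfun.induct)
  case (polyfun_const c)
  show ?case by (intro exI[of _ "\<lambda>u. 0"]) (auto intro: polyfun.polyfun_const)
next
  case (polyfun_add p q)
  then obtain p' q' where "polyfun p'" "polyfun q'"
    "\<forall>u. (p has_real_derivative p' u) (at u)" "\<forall>u. (q has_real_derivative q' u) (at u)"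
    by blast
  then show ?case
    by (intro exI[of _ "\<lambda>u. p' u + q' u"]) (auto intro: polyfun.polyfun_add derivative_intros)
next
  case (polyfun_mult_id p)
  then obtain p' where "polyfun p'" "\<forall>u. (p has_real_derivative p' u) (at u)" by blast
  then show ?case
    by (intro exI[of _ "\<lambda>u. p u + u * p' u"])
       (auto intro!: polyfun.polyfun_add polyfun.polyfun_mult_id polyfun_mult_id derivative_eq_intros)
qed

lemma polyfun_mult: "polyfun p \<Longrightarrow> polyfun q \<Longrightarrow> polyfun (\<lambda>u. p u * q u)"
proof (induction rule: polyfun.induct)
  case (polyfun_const c)
  then show ?case by (rule polyfun_cmult)
next
  case (polyfun_add p1 p2)
  then show ?case using polyfun.polyfun_add[of "\<lambda>u. p1 u * q u" "\<lambda>u. p2 u * q u"]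
    by (simp add: distrib_right)
next
  case (polyfun_mult_id p)
  then show ?case using polyfun.polyfun_mult_id[of "\<lambda>u. p u * q u"] by (simp add: mult.assoc)
qed

lemma polyfun_id: "polyfun (\<lambda>u. u)"
  using polyfun_mult_id[OF polyfun_const[of 1]] by simp

lemma polyfun_diff: "polyfun p \<Longrightarrow> polyfun q \<Longrightarrow> polyfun (\<lambda>u. p u - q u)"
  using polyfun_add[of p "\<lambda>u. (-1) * q u"] polyfun_cmult[of q "-1"] by simp

lemma exp_flat_div_power_tendsto_0:
  "polyfun p \<Longrightarrow> ((\<lambda>t. p (1/t) * exp (-(1/t)) / t ^ m) \<longlongrightarrow> 0) (at_right 0)"
proof (induction arbitrary: m rule: polyfun.induct)
  case (polyfun_const c)
  have "((\<lambda>y. c * (y ^ m / exp y)) \<longlongrightarrow> c * 0) at_top"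
    by (intro tendsto_intros tendsto_power_div_exp_0)
  then have "((\<lambda>t. c * ((1/t) ^ m / exp (1/t))) \<longlongrightarrow> 0) (at_right 0)"
    using filterlim_compose[OF _ filterlim_inverse_at_top_right, of "\<lambda>y. c * (y ^ m / exp y)"]
    by (simp add: inverse_eq_divide)
  then show ?case by (simp add: exp_minus power_one_over field_simps)
next
  case (polyfun_add p q)
  from tendsto_add[OF polyfun_add.IH(1)[of m] polyfun_add.IH(2)[of m]] show ?case
    by (simp add: add_divide_distrib distrib_right)
next
  case (polyfun_mult_id p)
  from polyfun_mult_id.IH[of "Suc m"] show ?case by (simp add: field_simps)
qed

text \<open>The difference quotient at \<open>0\<close> is \<open>p (1/t) * exp (-1/t) / t\<close> from the right, which
  vanishes in the limit because the exponential beats every power of \<open>1/t\<close>.\<close>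
lemma has_real_derivative_exp_flat_0:
  assumes "polyfun p"
  shows "(exp_flat p has_real_derivative 0) (at 0)"
proof -
  have right: "((\<lambda>y. (exp_flat p y - exp_flat p 0) / (y - 0)) \<longlongrightarrow> 0) (at_right 0)"
  proof (rule Lim_transform_eventually)
    show "((\<lambda>t. p (1/t) * exp (-(1/t)) / t ^ 1) \<longlongrightarrow> 0) (at_right 0)"
      by (rule exp_flat_div_power_tendsto_0[OF assms])
    show "\<forall>\<^sub>F y in at_right 0. p (1/y) * exp (-(1/y)) / y ^ 1 = (exp_flat p y - exp_flat p 0) / (y - 0)"
      using eventually_at_right_less[of "0::real"] by eventually_elim (auto simp: exp_flat_def)
  qed
  have left: "((\<lambda>y. (exp_flat p y - exp_flat p 0) / (y - 0)) \<longlongrightarrow> 0) (at_left 0)"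
  proof (rule Lim_transform_eventually[OF tendsto_const])
    have "\<forall>\<^sub>F y in at_left 0. y \<in> {-1<..<(0::real)}" by (rule eventually_at_left_real) simp
    then show "\<forall>\<^sub>F y in at_left 0. 0 = (exp_flat p y - exp_flat p 0) / (y - 0)"
      by eventually_elim (auto simp: exp_flat_def)
  qed
  from filterlim_split_at[OF left right] show ?thesis by (simp add: has_field_derivative_iff)
qed

lemma has_real_derivative_exp_flat:
  assumes "polyfun p" and p': "\<And>u. (p has_real_derivative p' u) (at u)"
  shows "(exp_flat p has_real_derivative exp_flat (\<lambda>u. u * u * (p u - p' u)) t) (at t)"
proof -
  consider "t > 0" | "t < 0" | "t = 0" by linarith
  then show ?thesis
  proof cases
    case 1
    have "((\<lambda>t. p (1/t) * exp (-(1/t))) has_real_derivative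
        p' (1/t) * (- 1 / t^2) * exp (-(1/t)) + p (1/t) * (exp (-(1/t)) * (1/t^2))) (at t)"
      using 1 by (auto intro!: derivative_eq_intros DERIV_chain2[OF p'] simp: power2_eq_square)
    then have "((\<lambda>t. p (1/t) * exp (-(1/t))) has_real_derivative
        exp_flat (\<lambda>u. u * u * (p u - p' u)) t) (at t)"
      using 1 by (simp add: exp_flat_def field_simps power2_eq_square)
    then show ?thesis
      by (rule has_field_derivative_transform_within_open[where S="{0<..}"])
         (use 1 in \<open>auto simp: exp_flat_def\<close>)
  next
    case 2
    have "((\<lambda>t. 0) has_real_derivative exp_flat (\<lambda>u. u * u * (p u - p' u)) t) (at t)"
      using 2 by (simp add: exp_flat_def)
    then show ?thesis
      by (rule has_field_derivative_transform_within_open[where S="{..<0}"])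
         (use 2 in \<open>auto simp: exp_flat_def\<close>)
  next
    case 3
    then show ?thesis
      using has_real_derivative_exp_flat_0[OF assms(1)] by (simp add: exp_flat_def)
  qed
qed

definition exp_flat_funs :: "(real \<Rightarrow> real) set" where
  "exp_flat_funs = {exp_flat p | p. polyfun p}"

lemma exp_flat_funs_has_real_derivative:
  assumes "g \<in> exp_flat_funs"
  shows "\<exists>g'\<in>exp_flat_funs. \<forall>t. (g has_real_derivative g' t) (at t)"
proof -
  obtain p where p: "polyfun p" "g = exp_flat p" using assms by (auto simp: exp_flat_funs_def)
  then obtain p' where p': "polyfun p'" "\<And>u. (p has_real_derivative p' u) (at u)"
    using polyfun_has_real_derivative by blast
  have "polyfun (\<lambda>u. u * (u * (p u + (-1) * p' u)))"
    by (intro polyfun_mult_id polyfun_add p polyfun_cmult p')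
  then have "exp_flat (\<lambda>u. u * u * (p u - p' u)) \<in> exp_flat_funs"
    unfolding exp_flat_funs_def by (auto simp: algebra_simps intro!: exI[of _ "\<lambda>u. u * (u * (p u + (-1) * p' u))"])
  then show ?thesis using has_real_derivative_exp_flat[OF p(1) p'(2)] p(2) by blast
qed

lemma exp_flat_funs_isCont: "g \<in> exp_flat_funs \<Longrightarrow> isCont g t"
  using exp_flat_funs_has_real_derivative DERIV_isCont by blast

inductive gen_smooth :: "(real^'n \<Rightarrow> real) \<Rightarrow> bool" where
  gen_smooth_const: "gen_smooth (\<lambda>x. c)"
| gen_smooth_component: "gen_smooth (\<lambda>x. x$i)"
| gen_smooth_add: "gen_smooth f \<Longrightarrow> gen_smooth g \<Longrightarrow> gen_smooth (\<lambda>x. f x + g x)"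
| gen_smooth_mult: "gen_smooth f \<Longrightarrow> gen_smooth g \<Longrightarrow> gen_smooth (\<lambda>x. f x * g x)"
| gen_smooth_compose: "g \<in> exp_flat_funs \<Longrightarrow> gen_smooth f \<Longrightarrow> gen_smooth (\<lambda>x. g (f x))"

lemma gen_smooth_has_derivative:
  "gen_smooth f \<Longrightarrow>
    \<exists>f'. (\<forall>x. (f has_derivative f' x) (at x)) \<and> (\<forall>i. gen_smooth (\<lambda>x. f' x (axis i 1)))"
proof (induction rule: gen_smooth.induct)
  case (gen_smooth_const c)
  show ?case by (intro exI[of _ "\<lambda>x h. 0"]) (auto intro: gen_smooth.gen_smooth_const)
next
  case (gen_smooth_component j)
  show ?case
  proof (intro exI[of _ "\<lambda>x h. h$j"] conjI allI)
    show "((\<lambda>x. x$j) has_derivative (\<lambda>h. h$j)) (at x)" for x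
      by (rule bounded_linear_imp_has_derivative[OF bounded_linear_vec_nth])
    have "(\<lambda>x::real^'n. axis i (1::real) $ j) = (\<lambda>x. if j = i then 1 else 0)" for i
      by (simp add: axis_def)
    then show "gen_smooth (\<lambda>x::real^'n. axis i (1::real) $ j)" for i
      using gen_smooth.gen_smooth_const by metis
  qed
next
  case (gen_smooth_add f g)
  then obtain f' g' where "\<forall>x. (f has_derivative f' x) (at x)" "\<forall>i. gen_smooth (\<lambda>x. f' x (axis i 1))"
      "\<forall>x. (g has_derivative g' x) (at x)" "\<forall>i. gen_smooth (\<lambda>x. g' x (axis i 1))" by blast
  then show ?case
    by (intro exI[of _ "\<lambda>x h. f' x h + g' x h"]) (auto intro: has_derivative_add gen_smooth.gen_smooth_add)
next
  case (gen_smooth_mult f g)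
  then obtain f' g' where f': "\<forall>x. (f has_derivative f' x) (at x)" "\<forall>i. gen_smooth (\<lambda>x. f' x (axis i 1))"
      and g': "\<forall>x. (g has_derivative g' x) (at x)" "\<forall>i. gen_smooth (\<lambda>x. g' x (axis i 1))" by blast
  show ?case
  proof (intro exI[of _ "\<lambda>x h. f x * g' x h + f' x h * g x"] conjI allI)
    show "((\<lambda>x. f x * g x) has_derivative (\<lambda>h. f x * g' x h + f' x h * g x)) (at x)" for x
      using has_derivative_mult[OF f'(1)[rule_format] g'(1)[rule_format]] .
    show "gen_smooth (\<lambda>x. f x * g' x (axis i 1) + f' x (axis i 1) * g x)" for i
      using gen_smooth_mult.hyps f'(2) g'(2)
      by (intro gen_smooth.gen_smooth_add gen_smooth.gen_smooth_mult) auto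
  qed
next
  case (gen_smooth_compose g f)
  then obtain f' where f': "\<forall>x. (f has_derivative f' x) (at x)" "\<forall>i. gen_smooth (\<lambda>x. f' x (axis i 1))"
    by blast
  obtain g' where g': "g' \<in> exp_flat_funs" "\<forall>t. (g has_real_derivative g' t) (at t)"
    using exp_flat_funs_has_real_derivative[OF gen_smooth_compose.hyps(1)] by blast
  show ?case
  proof (intro exI[of _ "\<lambda>x h. f' x h * g' (f x)"] conjI allI)
    show "((\<lambda>x. g (f x)) has_derivative (\<lambda>h. f' x h * g' (f x))) (at x)" for x
      using DERIV_compose_FDERIV[OF g'(2)[rule_format] f'(1)[rule_format]] .
    show "gen_smooth (\<lambda>x. f' x (axis i 1) * g' (f x))" for i
      using gen_smooth.gen_smooth_mult[OF f'(2)[rule_format] gen_smooth.gen_smooth_compose[OF g'(1)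
          gen_smooth_compose.hyps(2)]] .
  qed
qed

lemma gen_smooth_pderiv:
  assumes "gen_smooth f"
  shows "gen_smooth (pderiv i f)" and "f differentiable (at x)"
proof -
  obtain f' where f': "\<forall>x. (f has_derivative f' x) (at x)" "\<forall>i. gen_smooth (\<lambda>x. f' x (axis i 1))"
    using gen_smooth_has_derivative[OF assms] by blast
  have "pderiv i f = (\<lambda>x. f' x (axis i 1))"
    using f'(1) frechet_derivative_at unfolding pderiv_def by metis
  then show "gen_smooth (pderiv i f)" using f'(2) by simp
  show "f differentiable (at x)" using f'(1) unfolding differentiable_def by blast
qed

lemma gen_smooth_imp_smooth_fun:
  assumes "gen_smooth f"
  shows "smooth_fun f"
proof -
  have "gen_smooth (pderivs is f)" for "is"
    by (induction "is") (simp_all add: assms gen_smooth_pderiv(1))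
  then show ?thesis unfolding smooth_fun_def using gen_smooth_pderiv(2) by blast
qed

lemma gen_smooth_sum:
  "finite I \<Longrightarrow> (\<And>i. i \<in> I \<Longrightarrow> gen_smooth (f i)) \<Longrightarrow> gen_smooth (\<lambda>x. \<Sum>i\<in>I. f i x)"
  by (induction I rule: finite_induct)
     (simp_all add: gen_smooth_const[of 0] gen_smooth_add[of "f i" "\<lambda>x. \<Sum>i\<in>I. f i x" for i I])

lemma gen_smooth_inner_self: "gen_smooth (\<lambda>x::real^'n. x \<bullet> x)"
  unfolding inner_vec_def
  by (rule gen_smooth_sum) (auto intro: gen_smooth_mult gen_smooth_component)

section \<open>The cut-off profile\<close>

definition flat :: "real \<Rightarrow> real" where
  "flat = exp_flat (\<lambda>u. 1)"

definition flat_d1 :: "real \<Rightarrow> real" where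
  "flat_d1 = exp_flat (\<lambda>u. u * u)"

definition flat_d2 :: "real \<Rightarrow> real" where
  "flat_d2 = exp_flat (\<lambda>u. u * u * (u * u - 2 * u))"

lemma flat_eq: "flat t = (if 0 < t then exp (-(1/t)) else 0)"
  by (simp add: flat_def exp_flat_def)

lemma flat_d1_eq: "flat_d1 t = (if 0 < t then (1/t)^2 * exp (-(1/t)) else 0)"
  by (simp add: flat_d1_def exp_flat_def power2_eq_square)

lemma flat_d2_eq: "flat_d2 t = (if 0 < t then ((1/t)^4 - 2 * (1/t)^3) * exp (-(1/t)) else 0)"
  by (simp add: flat_d2_def exp_flat_def algebra_simps eval_nat_numeral)

lemma flat_in_exp_flat_funs: "flat \<in> exp_flat_funs"
  unfolding exp_flat_funs_def flat_def using polyfun_const by blast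

lemma flat_derivs_in_exp_flat_funs: "flat_d1 \<in> exp_flat_funs" "flat_d2 \<in> exp_flat_funs"
proof -
  have square: "polyfun (\<lambda>u. u * u)" by (rule polyfun_mult[OF polyfun_id polyfun_id])
  then show "flat_d1 \<in> exp_flat_funs" unfolding exp_flat_funs_def flat_d1_def by blast
  have "polyfun (\<lambda>u. u * u * (u * u - 2 * u))"
    by (rule polyfun_mult[OF square polyfun_diff[OF square polyfun_cmult[OF polyfun_id]]])
  then show "flat_d2 \<in> exp_flat_funs" unfolding exp_flat_funs_def flat_d2_def by blast
qed

lemma has_real_derivative_flat: "(flat has_real_derivative flat_d1 t) (at t)"
proof -
  have "(exp_flat (\<lambda>u. 1) has_real_derivative exp_flat (\<lambda>u. u * u * (1 - 0)) t) (at t)"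
    by (rule has_real_derivative_exp_flat) (auto intro: polyfun_const)
  then show ?thesis by (simp add: flat_def flat_d1_def)
qed

lemma has_real_derivative_flat_d1: "(flat_d1 has_real_derivative flat_d2 t) (at t)"
proof -
  have "((\<lambda>u. u * u) has_real_derivative 2 * u) (at u)" for u
    using DERIV_mult[OF DERIV_ident DERIV_ident, of u] by simp
  from has_real_derivative_exp_flat[OF polyfun_mult[OF polyfun_id polyfun_id] this]
  show ?thesis by (simp add: flat_d1_def flat_d2_def)
qed

lemma flat_chain [derivative_intros]:
  "(f has_real_derivative f') (at x within S) \<Longrightarrow>
    ((\<lambda>x. flat (f x)) has_real_derivative flat_d1 (f x) * f') (at x within S)"
  using DERIV_chain2[OF has_real_derivative_flat] by blast

lemma flat_d1_chain [derivative_intros]: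
  "(f has_real_derivative f') (at x within S) \<Longrightarrow>
    ((\<lambda>x. flat_d1 (f x)) has_real_derivative flat_d2 (f x) * f') (at x within S)"
  using DERIV_chain2[OF has_real_derivative_flat_d1] by blast

lemma isCont_flat: "isCont flat t" and isCont_flat_d1: "isCont flat_d1 t"
  and isCont_flat_d2: "isCont flat_d2 t"
  using exp_flat_funs_isCont flat_in_exp_flat_funs flat_derivs_in_exp_flat_funs by blast+

lemma continuous_on_UNIV_flat: "continuous_on UNIV flat" "continuous_on UNIV flat_d1" "continuous_on UNIV flat_d2"
  using isCont_flat isCont_flat_d1 isCont_flat_d2 by (blast intro: continuous_at_imp_continuous_on)+

lemma continuous_on_flat_d1 [continuous_intros]:
  "continuous_on S f \<Longrightarrow> continuous_on S (\<lambda>x. flat_d1 (f x))"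
  and continuous_on_flat_d2 [continuous_intros]:
  "continuous_on S f \<Longrightarrow> continuous_on S (\<lambda>x. flat_d2 (f x))"
  using continuous_on_compose2[OF continuous_on_UNIV_flat(2) _ subset_UNIV]
    continuous_on_compose2[OF continuous_on_UNIV_flat(3) _ subset_UNIV] by blast+

lemma borel_measurable_flat [measurable]:
  "flat \<in> borel_measurable borel" "flat_d1 \<in> borel_measurable borel" "flat_d2 \<in> borel_measurable borel"
  using continuous_on_UNIV_flat by (blast intro: borel_measurable_continuous_onI)+

lemma flat_nonneg: "0 \<le> flat t"
  by (simp add: flat_eq)

lemma flat_le_1: "flat t \<le> 1"
  by (simp add: flat_eq)

lemma exp_1_mult_flat_le_1: "t \<le> 1 \<Longrightarrow> exp 1 * flat t \<le> 1"
proof (cases "0 < t")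
  case True
  assume "t \<le> 1"
  then have "exp (-(1/t)) \<le> exp (-1)" using True by (simp add: field_simps)
  then show ?thesis using True by (simp add: flat_eq exp_minus field_simps)
qed (simp add: flat_eq)

lemma bounded_on_atLeast_if_tendsto:
  fixes f :: "real \<Rightarrow> real"
  assumes f: "continuous_on {a..} f" and lim: "(f \<longlongrightarrow> l) at_top"
  shows "\<exists>B. \<forall>t\<ge>a. \<bar>f t\<bar> \<le> B"
proof -
  have "\<forall>\<^sub>F t in at_top. dist (f t) l < 1"
    using lim by (rule tendstoD) simp
  then obtain T where T: "\<And>t. t \<ge> T \<Longrightarrow> dist (f t) l < 1"
    by (auto simp: eventually_at_top_linorder)
  have "bounded (f ` {a..max a T})"
    by (intro compact_imp_bounded compact_continuous_image continuous_on_subset[OF f]) auto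
  then obtain B where B: "\<forall>y\<in>f ` {a..max a T}. \<bar>y\<bar> \<le> B"
    by (auto simp: bounded_real)
  have "\<bar>f t\<bar> \<le> max B (\<bar>l\<bar> + 1)" if "t \<ge> a" for t
  proof (cases "t \<le> max a T")
    case True
    then have "\<bar>f t\<bar> \<le> B" using B that by auto
    then show ?thesis by linarith
  next
    case False
    then have "\<bar>f t - l\<bar> < 1" using T[of t] by (simp add: dist_real_def)
    then show ?thesis by linarith
  qed
  then show ?thesis by blast
qed

lemma flat_tendsto_at_top:
  "((\<lambda>t. flat (t - 1)) \<longlongrightarrow> 1) at_top"
  "((\<lambda>t. t * flat_d1 (t - 1)) \<longlongrightarrow> 0) at_top"
  "((\<lambda>t. t\<^sup>2 * flat_d2 (t - 1)) \<longlongrightarrow> 0) at_top"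
proof -
  have "((\<lambda>t::real. exp (-(1/(t-1)))) \<longlongrightarrow> 1) at_top"
    "((\<lambda>t::real. t * ((1/(t-1))^2 * exp (-(1/(t-1))))) \<longlongrightarrow> 0) at_top"
    "((\<lambda>t::real. t\<^sup>2 * (((1/(t-1))^4 - 2 * (1/(t-1))^3) * exp (-(1/(t-1))))) \<longlongrightarrow> 0) at_top"
    by real_asymp+
  moreover have "\<forall>\<^sub>F t in at_top. exp (-(1/(t-1))) = flat (t - 1)"
    "\<forall>\<^sub>F t in at_top. t * ((1/(t-1))^2 * exp (-(1/(t-1)))) = t * flat_d1 (t - 1)"
    "\<forall>\<^sub>F t in at_top.
      t\<^sup>2 * (((1/(t-1))^4 - 2 * (1/(t-1))^3) * exp (-(1/(t-1)))) = t\<^sup>2 * flat_d2 (t - 1)"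
    using eventually_gt_at_top[of 1] by (eventually_elim, simp add: flat_eq flat_d1_eq flat_d2_eq)+
  ultimately show "((\<lambda>t. flat (t - 1)) \<longlongrightarrow> 1) at_top"
    "((\<lambda>t. t * flat_d1 (t - 1)) \<longlongrightarrow> 0) at_top"
    "((\<lambda>t. t\<^sup>2 * flat_d2 (t - 1)) \<longlongrightarrow> 0) at_top"
    by (blast intro: Lim_transform_eventually)+
qed

lemma scaled_flat_derivs_bounded:
  "\<exists>B. \<forall>t\<ge>0. \<bar>t * flat_d1 (t - 1)\<bar> \<le> B \<and> \<bar>t * flat_d1 (1 - t)\<bar> \<le> B
              \<and> \<bar>t\<^sup>2 * flat_d2 (t - 1)\<bar> \<le> B \<and> \<bar>t\<^sup>2 * flat_d2 (1 - t)\<bar> \<le> B"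
proof -
  note lim1 = flat_tendsto_at_top(2) and lim3 = flat_tendsto_at_top(3)
  have "\<forall>\<^sub>F t in at_top. t * flat_d1 (1 - t) = 0" "\<forall>\<^sub>F t in at_top. t\<^sup>2 * flat_d2 (1 - t) = 0"
    using eventually_ge_at_top[of "1::real"] by (eventually_elim, simp add: flat_d1_eq flat_d2_eq)+
  then have lim2: "((\<lambda>t. t * flat_d1 (1 - t)) \<longlongrightarrow> 0) at_top"
    and lim4: "((\<lambda>t. t\<^sup>2 * flat_d2 (1 - t)) \<longlongrightarrow> 0) at_top"
    by (auto intro: tendsto_eventually)
  have cont1: "continuous_on {0..} (\<lambda>t. t * flat_d1 (t - 1))"
    and cont2: "continuous_on {0..} (\<lambda>t. t * flat_d1 (1 - t))"
    and cont3: "continuous_on {0..} (\<lambda>t. t\<^sup>2 * flat_d2 (t - 1))"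
    and cont4: "continuous_on {0..} (\<lambda>t. t\<^sup>2 * flat_d2 (1 - t))"
    by (intro continuous_intros)+
  obtain B1 B2 B3 B4 where B1: "\<forall>t\<ge>0. \<bar>t * flat_d1 (t - 1)\<bar> \<le> B1"
    and B2: "\<forall>t\<ge>0. \<bar>t * flat_d1 (1 - t)\<bar> \<le> B2"
    and B3: "\<forall>t\<ge>0. \<bar>t\<^sup>2 * flat_d2 (t - 1)\<bar> \<le> B3"
    and B4: "\<forall>t\<ge>0. \<bar>t\<^sup>2 * flat_d2 (1 - t)\<bar> \<le> B4"
    using bounded_on_atLeast_if_tendsto[OF cont1 lim1] bounded_on_atLeast_if_tendsto[OF cont2 lim2]
      bounded_on_atLeast_if_tendsto[OF cont3 lim3] bounded_on_atLeast_if_tendsto[OF cont4 lim4]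
    by blast
  show ?thesis
  proof (intro exI allI impI)
    fix t :: real
    assume "0 \<le> t"
    then show "\<bar>t * flat_d1 (t - 1)\<bar> \<le> max (max B1 B2) (max B3 B4) \<and> \<bar>t * flat_d1 (1 - t)\<bar> \<le> max (max B1 B2) (max B3 B4)
        \<and> \<bar>t\<^sup>2 * flat_d2 (t - 1)\<bar> \<le> max (max B1 B2) (max B3 B4) \<and> \<bar>t\<^sup>2 * flat_d2 (1 - t)\<bar> \<le> max (max B1 B2) (max B3 B4)"
      using B1 B2 B3 B4 by (simp add: le_max_iff_disj)
  qed
qed

definition cutoff :: "real \<Rightarrow> real \<Rightarrow> real" where
  "cutoff c s = flat (c * s - 1) * (exp 1 * flat (1 - s / c))"

definition cutoff_d1 :: "real \<Rightarrow> real \<Rightarrow> real" where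
  "cutoff_d1 c s = c * flat_d1 (c * s - 1) * (exp 1 * flat (1 - s / c))
     - flat (c * s - 1) * (exp 1 * flat_d1 (1 - s / c)) / c"

definition cutoff_d2 :: "real \<Rightarrow> real \<Rightarrow> real" where
  "cutoff_d2 c s = c\<^sup>2 * flat_d2 (c * s - 1) * (exp 1 * flat (1 - s / c))
     - 2 * flat_d1 (c * s - 1) * (exp 1 * flat_d1 (1 - s / c))
     + flat (c * s - 1) * (exp 1 * flat_d2 (1 - s / c)) / c\<^sup>2"

lemma has_real_derivative_cutoff: "c \<noteq> 0 \<Longrightarrow> (cutoff c has_real_derivative cutoff_d1 c s) (at s)"
  unfolding cutoff_def cutoff_d1_def
  by (rule derivative_eq_intros refl | simp)+

lemma has_real_derivative_cutoff_d1: "c \<noteq> 0 \<Longrightarrow> (cutoff_d1 c has_real_derivative cutoff_d2 c s) (at s)"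
  unfolding cutoff_d1_def cutoff_d2_def
  apply (rule derivative_eq_intros refl | assumption)+
  apply (simp add: power2_eq_square algebra_simps)
  apply (simp add: field_simps)
  done

lemma borel_measurable_cutoff [measurable]: "cutoff c \<in> borel_measurable borel"
  unfolding cutoff_def[abs_def] by measurable

lemma borel_measurable_cutoff_d1 [measurable]: "cutoff_d1 c \<in> borel_measurable borel"
  unfolding cutoff_d1_def[abs_def] by measurable

lemma borel_measurable_cutoff_d2 [measurable]: "cutoff_d2 c \<in> borel_measurable borel"
  unfolding cutoff_d2_def[abs_def] by measurable

lemma cutoff_nonneg: "0 \<le> cutoff c s"
  unfolding cutoff_def by (intro mult_nonneg_nonneg flat_nonneg) simp

lemma cutoff_le_1: "0 < c \<Longrightarrow> 0 \<le> s \<Longrightarrow> cutoff c s \<le> 1"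
  unfolding cutoff_def
  by (rule mult_le_one[OF flat_le_1 _ exp_1_mult_flat_le_1]) (simp_all add: flat_nonneg)

lemma flat_nonzero_imp_pos: "flat t \<noteq> 0 \<Longrightarrow> 0 < t"
  by (metis flat_eq)

lemma cutoff_nonzero_bounds:
  assumes "0 < c" "cutoff c s \<noteq> 0"
  shows "1 / c < s \<and> s < c"
proof -
  have "0 < c * s - 1" "0 < 1 - s / c"
    using assms(2) flat_nonzero_imp_pos[of "c * s - 1"] flat_nonzero_imp_pos[of "1 - s / c"]
    by (auto simp: cutoff_def)
  then show ?thesis using assms(1) by (simp add: field_simps)
qed

text \<open>In the variables \<open>c * s\<close> and \<open>s / c\<close> every term of \<open>s * cutoff_d1 c s\<close> and
  \<open>s\<^sup>2 * cutoff_d2 c s\<close> is a product of bounded functions of one variable, whence bounds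
  uniform in \<open>c\<close>.\<close>
lemma scaled_cutoff_d1_eq: "c \<noteq> 0 \<Longrightarrow> s * cutoff_d1 c s =
    (c * s) * flat_d1 (c * s - 1) * (exp 1 * flat (1 - s / c))
    - flat (c * s - 1) * exp 1 * ((s / c) * flat_d1 (1 - s / c))"
  by (simp add: cutoff_d1_def field_simps)

lemma scaled_cutoff_d2_eq: "c \<noteq> 0 \<Longrightarrow> s\<^sup>2 * cutoff_d2 c s =
    (c * s)\<^sup>2 * flat_d2 (c * s - 1) * (exp 1 * flat (1 - s / c))
    - 2 * ((c * s) * flat_d1 (c * s - 1)) * exp 1 * ((s / c) * flat_d1 (1 - s / c))
    + flat (c * s - 1) * exp 1 * ((s / c)\<^sup>2 * flat_d2 (1 - s / c))"
  unfolding cutoff_d2_def power2_eq_square by (simp add: algebra_simps)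

lemma scaled_cutoff_derivs_bounded:
  "\<exists>B. \<forall>c>0. \<forall>s\<ge>0. \<bar>s * cutoff_d1 c s\<bar> \<le> B \<and> \<bar>s\<^sup>2 * cutoff_d2 c s\<bar> \<le> B"
proof -
  obtain B where B: "\<And>t. 0 \<le> t \<Longrightarrow> \<bar>t * flat_d1 (t - 1)\<bar> \<le> B \<and> \<bar>t * flat_d1 (1 - t)\<bar> \<le> B
      \<and> \<bar>t\<^sup>2 * flat_d2 (t - 1)\<bar> \<le> B \<and> \<bar>t\<^sup>2 * flat_d2 (1 - t)\<bar> \<le> B"
    using scaled_flat_derivs_bounded by blast
  have mult_le: "\<bar>x * y\<bar> \<le> X * Y" if "\<bar>x\<bar> \<le> X" "\<bar>y\<bar> \<le> Y" for x y X Y :: real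
    using mult_mono'[OF that abs_ge_zero abs_ge_zero] by (simp add: abs_mult)
  have flat_abs: "\<bar>flat t\<bar> \<le> 1" for t using flat_nonneg flat_le_1 by (simp add: abs_le_iff)
  define K where "K = max (B + exp 1 * B) (B + 2 * B * exp 1 * B + exp 1 * B)"
  have "\<bar>s * cutoff_d1 c s\<bar> \<le> K \<and> \<bar>s\<^sup>2 * cutoff_d2 c s\<bar> \<le> K" if "0 < c" "0 \<le> s" for c s
  proof -
    have cs: "0 \<le> c * s" and sc: "0 \<le> s / c" using that by auto
    note Bcs = B[OF cs] and Bsc = B[OF sc]
    have fall: "\<bar>exp 1 * flat (1 - s / c)\<bar> \<le> 1"
      using exp_1_mult_flat_le_1[of "1 - s / c"] flat_nonneg[of "1 - s / c"] sc by simp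
    have e: "\<bar>exp (1::real)\<bar> \<le> exp 1" by simp
    have two: "\<bar>2::real\<bar> \<le> 2" by simp
    have a: "\<bar>(c * s) * flat_d1 (c * s - 1) * (exp 1 * flat (1 - s / c))\<bar> \<le> B * 1"
      using mult_le[OF conjunct1[OF Bcs] fall] .
    have b: "\<bar>flat (c * s - 1) * exp 1 * ((s / c) * flat_d1 (1 - s / c))\<bar> \<le> 1 * exp 1 * B"
      using mult_le[OF mult_le[OF flat_abs e] conjunct1[OF conjunct2[OF Bsc]]] .
    have a2: "\<bar>(c * s)\<^sup>2 * flat_d2 (c * s - 1) * (exp 1 * flat (1 - s / c))\<bar> \<le> B * 1"
      using mult_le[OF conjunct1[OF conjunct2[OF conjunct2[OF Bcs]]] fall] .
    have b2: "\<bar>2 * ((c * s) * flat_d1 (c * s - 1)) * exp 1 * ((s / c) * flat_d1 (1 - s / c))\<bar>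
        \<le> 2 * B * exp 1 * B"
      using mult_le[OF mult_le[OF mult_le[OF two conjunct1[OF Bcs]] e] conjunct1[OF conjunct2[OF Bsc]]] .
    have d2: "\<bar>flat (c * s - 1) * exp 1 * ((s / c)\<^sup>2 * flat_d2 (1 - s / c))\<bar> \<le> 1 * exp 1 * B"
      using mult_le[OF mult_le[OF flat_abs e] conjunct2[OF conjunct2[OF conjunct2[OF Bsc]]]] .
    have "c \<noteq> 0" using that by simp
    have "\<bar>s * cutoff_d1 c s\<bar> \<le> B + exp 1 * B"
      unfolding scaled_cutoff_d1_eq[OF \<open>c \<noteq> 0\<close>] using a b abs_triangle_ineq4 by (smt (verit))
    moreover have "\<bar>s\<^sup>2 * cutoff_d2 c s\<bar> \<le> B + 2 * B * exp 1 * B + exp 1 * B"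
      unfolding scaled_cutoff_d2_eq[OF \<open>c \<noteq> 0\<close>] using a2 b2 d2 by (smt (verit))
    ultimately show ?thesis unfolding K_def by linarith
  qed
  then show ?thesis by blast
qed

lemma cutoff_factors_tendsto:
  assumes s: "0 < s"
  shows "((\<lambda>c. flat (c * s - 1)) \<longlongrightarrow> 1) at_top"
    and "((\<lambda>c. (c * s) * flat_d1 (c * s - 1)) \<longlongrightarrow> 0) at_top"
    and "((\<lambda>c. (c * s)\<^sup>2 * flat_d2 (c * s - 1)) \<longlongrightarrow> 0) at_top"
    and "((\<lambda>c. exp 1 * flat (1 - s / c)) \<longlongrightarrow> 1) at_top"
    and "((\<lambda>c. (s / c) * flat_d1 (1 - s / c)) \<longlongrightarrow> 0) at_top"
    and "((\<lambda>c. (s / c)\<^sup>2 * flat_d2 (1 - s / c)) \<longlongrightarrow> 0) at_top"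
proof -
  have inner: "filterlim (\<lambda>c. c * s) at_top at_top"
    by (rule filterlim_at_top_mult_tendsto_pos[OF tendsto_const s filterlim_ident])
  have outer: "((\<lambda>c. s / c) \<longlongrightarrow> 0) at_top"
    by (rule tendsto_divide_0[OF tendsto_const filterlim_at_top_imp_at_infinity[OF filterlim_ident]])
  show "((\<lambda>c. flat (c * s - 1)) \<longlongrightarrow> 1) at_top"
    using filterlim_compose[OF flat_tendsto_at_top(1) inner] by simp
  show "((\<lambda>c. (c * s) * flat_d1 (c * s - 1)) \<longlongrightarrow> 0) at_top"
    using filterlim_compose[OF flat_tendsto_at_top(2) inner] by simp
  show "((\<lambda>c. (c * s)\<^sup>2 * flat_d2 (c * s - 1)) \<longlongrightarrow> 0) at_top"
    using filterlim_compose[OF flat_tendsto_at_top(3) inner] by simp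
  have "((\<lambda>c. exp 1 * flat (1 - s / c)) \<longlongrightarrow> exp 1 * flat (1 - 0)) at_top"
    by (intro tendsto_intros isCont_tendsto_compose[OF isCont_flat] outer)
  then show "((\<lambda>c. exp 1 * flat (1 - s / c)) \<longlongrightarrow> 1) at_top"
    by (simp add: flat_eq exp_minus)
  have "((\<lambda>c. (s / c) * flat_d1 (1 - s / c)) \<longlongrightarrow> 0 * flat_d1 (1 - 0)) at_top"
    by (intro tendsto_intros isCont_tendsto_compose[OF isCont_flat_d1] outer)
  then show "((\<lambda>c. (s / c) * flat_d1 (1 - s / c)) \<longlongrightarrow> 0) at_top" by simp
  have "((\<lambda>c. (s / c)\<^sup>2 * flat_d2 (1 - s / c)) \<longlongrightarrow> 0\<^sup>2 * flat_d2 (1 - 0)) at_top"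
    by (intro tendsto_intros isCont_tendsto_compose[OF isCont_flat_d2] outer)
  then show "((\<lambda>c. (s / c)\<^sup>2 * flat_d2 (1 - s / c)) \<longlongrightarrow> 0) at_top" by simp
qed

lemma cutoff_tendsto:
  assumes s: "0 < s"
  shows "((\<lambda>c. cutoff c s) \<longlongrightarrow> 1) at_top"
    and "((\<lambda>c. s * cutoff_d1 c s) \<longlongrightarrow> 0) at_top"
    and "((\<lambda>c. s\<^sup>2 * cutoff_d2 c s) \<longlongrightarrow> 0) at_top"
proof -
  note B = cutoff_factors_tendsto(1)[OF s] and A = cutoff_factors_tendsto(2)[OF s]
    and A2 = cutoff_factors_tendsto(3)[OF s] and G = cutoff_factors_tendsto(4)[OF s]
    and U = cutoff_factors_tendsto(5)[OF s] and U2 = cutoff_factors_tendsto(6)[OF s]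
  have c0: "\<forall>\<^sub>F c in at_top. c \<noteq> (0::real)" using eventually_gt_at_top[of 0] by eventually_elim simp
  show "((\<lambda>c. cutoff c s) \<longlongrightarrow> 1) at_top"
    unfolding cutoff_def using tendsto_mult[OF B G] by simp
  have "((\<lambda>c. (c * s) * flat_d1 (c * s - 1) * (exp 1 * flat (1 - s / c))
      - flat (c * s - 1) * exp 1 * ((s / c) * flat_d1 (1 - s / c))) \<longlongrightarrow> 0) at_top"
    using tendsto_diff[OF tendsto_mult[OF A G] tendsto_mult[OF tendsto_mult[OF B tendsto_const] U]]
    by simp
  moreover have "\<forall>\<^sub>F c in at_top. (c * s) * flat_d1 (c * s - 1) * (exp 1 * flat (1 - s / c))
      - flat (c * s - 1) * exp 1 * ((s / c) * flat_d1 (1 - s / c)) = s * cutoff_d1 c s"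
    using c0 by eventually_elim (simp add: scaled_cutoff_d1_eq)
  ultimately show "((\<lambda>c. s * cutoff_d1 c s) \<longlongrightarrow> 0) at_top"
    by (rule Lim_transform_eventually)
  have "((\<lambda>c. (c * s)\<^sup>2 * flat_d2 (c * s - 1) * (exp 1 * flat (1 - s / c))
      - 2 * ((c * s) * flat_d1 (c * s - 1)) * exp 1 * ((s / c) * flat_d1 (1 - s / c))
      + flat (c * s - 1) * exp 1 * ((s / c)\<^sup>2 * flat_d2 (1 - s / c))) \<longlongrightarrow> 0) at_top"
    using tendsto_add[OF tendsto_diff[OF tendsto_mult[OF A2 G]
        tendsto_mult[OF tendsto_mult[OF tendsto_mult[OF tendsto_const A] tendsto_const] U]]
        tendsto_mult[OF tendsto_mult[OF B tendsto_const] U2]]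
    by simp
  moreover have "\<forall>\<^sub>F c in at_top. (c * s)\<^sup>2 * flat_d2 (c * s - 1) * (exp 1 * flat (1 - s / c))
      - 2 * ((c * s) * flat_d1 (c * s - 1)) * exp 1 * ((s / c) * flat_d1 (1 - s / c))
      + flat (c * s - 1) * exp 1 * ((s / c)\<^sup>2 * flat_d2 (1 - s / c)) = s\<^sup>2 * cutoff_d2 c s"
    using c0 by eventually_elim (simp add: scaled_cutoff_d2_eq)
  ultimately show "((\<lambda>c. s\<^sup>2 * cutoff_d2 c s) \<longlongrightarrow> 0) at_top"
    by (rule Lim_transform_eventually)
qed

section \<open>Integrability of powers of the norm\<close>

lemma ex_power_le_less:
  fixes q r :: real
  assumes q: "1 < q" and r: "1 \<le> r"
  shows "\<exists>m. q ^ m \<le> r \<and> r < q ^ Suc m"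
proof -
  define m where "m = nat \<lfloor>log q r\<rfloor>"
  have l: "0 \<le> log q r" using q r by simp
  have m: "real m \<le> log q r" "log q r < real m + 1"
    using l unfolding m_def by linarith+
  have "q ^ m = q powr real m" using q by (simp add: powr_realpow)
  also have "\<dots> \<le> q powr log q r" using q m(1) by (intro powr_mono) auto
  also have "\<dots> = r" using q r by simp
  finally have "q ^ m \<le> r" .
  moreover have "r < q powr (real m + 1)"
    using powr_less_mono[OF m(2), of q] q r by simp
  then have "r < q ^ Suc m"
    using powr_realpow[of q "Suc m"] q unfolding of_nat_Suc by (simp add: add.commute)
  ultimately show ?thesis by blast
qed

lemma ennreal_le_suminf: "(f :: nat \<Rightarrow> ennreal) m \<le> suminf f"
  using sum_le_suminf[OF summableI, of "{m}" f] by simp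

lemma sets_borel_cball [measurable]: "cball c r \<in> sets borel"
  by (simp add: borel_closed)

lemma nn_integral_geometric_cballs_finite:
  fixes \<rho> \<theta> r :: real
  assumes "0 \<le> \<rho>" "0 < \<theta>" "0 \<le> r" "\<rho> * \<theta> ^ DIM('a) < 1"
  shows "(\<integral>\<^sup>+x. (\<Sum>j. ennreal (\<rho> ^ j) * indicator (cball (0::'a::euclidean_space) (r * \<theta> ^ j)) x)
           \<partial>lborel) < \<infinity>"
proof -
  define V where "V = unit_ball_vol (real DIM('a)) * r ^ DIM('a)"
  have V: "0 \<le> V" unfolding V_def using assms(3) by simp
  have "(\<integral>\<^sup>+x. (\<Sum>j. ennreal (\<rho> ^ j) * indicator (cball (0::'a) (r * \<theta> ^ j)) x) \<partial>lborel)
      = (\<Sum>j. \<integral>\<^sup>+x. ennreal (\<rho> ^ j) * indicator (cball (0::'a) (r * \<theta> ^ j)) x \<partial>lborel)"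
    by (rule nn_integral_suminf) measurable
  also have "\<dots> = (\<Sum>j. ennreal (V * (\<rho> * \<theta> ^ DIM('a)) ^ j))"
  proof (rule suminf_cong)
    fix j
    have "(\<integral>\<^sup>+x. ennreal (\<rho> ^ j) * indicator (cball (0::'a) (r * \<theta> ^ j)) x \<partial>lborel)
        = ennreal (\<rho> ^ j) * emeasure lborel (cball (0::'a) (r * \<theta> ^ j))"
      by (rule nn_integral_cmult_indicator) simp
    also have "\<dots> = ennreal (V * (\<rho> * \<theta> ^ DIM('a)) ^ j)"
      using assms V by (simp add: emeasure_cball V_def ennreal_mult' power_mult_distrib
          power_mult[symmetric] mult.commute mult.left_commute)
    finally show "(\<integral>\<^sup>+x. ennreal (\<rho> ^ j) * indicator (cball (0::'a) (r * \<theta> ^ j)) x \<partial>lborel)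
        = ennreal (V * (\<rho> * \<theta> ^ DIM('a)) ^ j)" .
  qed
  also have "\<dots> = ennreal (\<Sum>j. V * (\<rho> * \<theta> ^ DIM('a)) ^ j)"
    using assms V by (intro suminf_ennreal2 summable_mult summable_geometric) auto
  finally show ?thesis by simp
qed

lemma norm_powr_le_dyadic_cballs:
  fixes x :: "'a::euclidean_space"
  assumes s: "s < 0"
  shows "ennreal (indicator (cball 0 1) x * norm x powr s)
    \<le> ennreal (2 powr - s) * (\<Sum>j. ennreal ((2 powr - s) ^ j) * indicator (cball (0::'a) (1 * (1/2) ^ j)) x)"
proof (cases "x \<in> cball 0 1 \<and> x \<noteq> 0")
  case True
  define \<rho> where "\<rho> = (2::real) powr (- s)"
  then have \<rho>: "0 < \<rho>" by simp
  have "1 \<le> 1 / norm x" using True by (simp add: field_simps)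
  then obtain m where m: "2 ^ m \<le> 1 / norm x" "1 / norm x < 2 ^ Suc m"
    using ex_power_le_less[of 2] by auto
  have "norm x powr s \<le> ((1/2) ^ Suc m) powr s"
    using True m(2) s by (intro powr_mono2') (auto simp: field_simps)
  also have "(1/2::real) ^ Suc m = inverse (2 powr real (Suc m))"
    using powr_realpow[of 2 "Suc m"] by (simp add: power_one_over inverse_eq_divide)
  also have "inverse (2 powr real (Suc m)) powr s = 2 powr (- (real (Suc m) * s))"
    by (simp add: inverse_powr powr_powr powr_minus)
  also have "\<dots> = \<rho> * \<rho> ^ m"
    by (simp add: \<rho>_def powr_power powr_add[symmetric] algebra_simps)
  finally have "ennreal (indicator (cball 0 1) x * norm x powr s)
      \<le> ennreal \<rho> * (ennreal (\<rho> ^ m) * indicator (cball (0::'a) (1 * (1/2) ^ m)) x)"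
    using True m(1) \<rho> by (auto simp: field_simps ennreal_mult[symmetric] intro!: ennreal_leI)
  also have "\<dots> \<le> ennreal \<rho> * (\<Sum>j. ennreal (\<rho> ^ j) * indicator (cball (0::'a) (1 * (1/2) ^ j)) x)"
    by (intro mult_left_mono ennreal_le_suminf) simp
  finally show ?thesis unfolding \<rho>_def .
next
  case False
  then have "indicator (cball 0 1) x * norm x powr s = 0" by (auto simp: indicator_def)
  then show ?thesis by (metis ennreal_0 zero_le)
qed

lemma integrable_norm_powr_cball:
  fixes s :: real
  assumes s: "- real DIM('a) < s"
  shows "integrable lborel (\<lambda>x::'a::euclidean_space. indicator (cball 0 1) x * norm x powr s)"
proof -
  define s' where "s' = min s (-1/2)"
  have s': "- real DIM('a) < s'" "s' < 0"
    using s DIM_positive[where 'a='a] unfolding s'_def by linarith+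
  define \<rho> where "\<rho> = (2::real) powr (- s')"
  have \<rho>: "0 < \<rho>" "\<rho> * (1/2) ^ DIM('a) < 1"
  proof -
    show "0 < \<rho>" by (simp add: \<rho>_def)
    have "\<rho> < 2 powr real DIM('a)" unfolding \<rho>_def using s' by (intro powr_less_mono) auto
    then show "\<rho> * (1/2) ^ DIM('a) < 1" by (simp add: powr_realpow field_simps)
  qed
  have "(\<integral>\<^sup>+x. ennreal (norm (indicator (cball 0 1) (x::'a) * norm x powr s')) \<partial>lborel)
      \<le> (\<integral>\<^sup>+x. ennreal \<rho> * (\<Sum>j. ennreal (\<rho> ^ j) * indicator (cball (0::'a) (1 * (1/2) ^ j)) x) \<partial>lborel)"
    using norm_powr_le_dyadic_cballs[OF s'(2)]
    by (intro nn_integral_mono) (simp add: abs_mult \<rho>_def)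
  also have "\<dots> = ennreal \<rho> * (\<integral>\<^sup>+x. (\<Sum>j. ennreal (\<rho> ^ j) * indicator (cball (0::'a) (1 * (1/2) ^ j)) x) \<partial>lborel)"
    by (rule nn_integral_cmult) measurable
  also have "\<dots> < \<infinity>"
    using nn_integral_geometric_cballs_finite[where 'a='a, of \<rho> "1/2" 1] \<rho> by (simp add: ennreal_mult_less_top)
  finally have "integrable lborel (\<lambda>x::'a. indicator (cball 0 1) x * norm x powr s')"
    by (intro integrableI_bounded) measurable
  then show ?thesis
  proof (rule Bochner_Integration.integrable_bound)
    show "AE x in lborel. norm (indicator (cball 0 1) x * norm x powr s) \<le> norm (indicator (cball (0::'a) 1) x * norm x powr s')"
      by (intro AE_I2) (auto simp: indicator_def s'_def intro: powr_mono')
  qed measurable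
qed

lemma integrable_norm_powr_outside_cball:
  fixes s :: real
  assumes s: "s < - real DIM('a)"
  shows "integrable lborel (\<lambda>x::'a::euclidean_space. indicator (- cball 0 1) x * norm x powr s)"
proof -
  define \<rho> where "\<rho> = (2::real) powr s"
  have \<rho>: "0 < \<rho>" "\<rho> * 2 ^ DIM('a) < 1"
  proof -
    show "0 < \<rho>" by (simp add: \<rho>_def)
    have "\<rho> < 2 powr (- real DIM('a))" unfolding \<rho>_def using s by (intro powr_less_mono) auto
    then show "\<rho> * 2 ^ DIM('a) < 1" by (simp add: powr_minus powr_realpow field_simps)
  qed
  have bound: "ennreal (indicator (- cball 0 1) x * norm x powr s)
      \<le> (\<Sum>j. ennreal (\<rho> ^ j) * indicator (cball (0::'a) (2 * 2 ^ j)) x)" for x :: 'a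
  proof (cases "1 < norm x")
    case True
    then obtain m where m: "2 ^ m \<le> norm x" "norm x < 2 ^ Suc m"
      using ex_power_le_less[of 2 "norm x"] by auto
    have "norm x powr s \<le> (2 ^ m) powr s"
      using m(1) s by (intro powr_mono2') auto
    also have "(2::real) ^ m = 2 powr real m"
      by (simp add: powr_realpow)
    also have "(2 powr real m) powr s = \<rho> ^ m"
      by (simp add: \<rho>_def powr_powr powr_power mult.commute)
    finally have "ennreal (indicator (- cball 0 1) x * norm x powr s)
        \<le> ennreal (\<rho> ^ m) * indicator (cball (0::'a) (2 * 2 ^ m)) x"
      using True m(2) by (auto simp: indicator_def intro!: ennreal_leI)
    also have "\<dots> \<le> (\<Sum>j. ennreal (\<rho> ^ j) * indicator (cball (0::'a) (2 * 2 ^ j)) x)"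
      by (rule ennreal_le_suminf)
    finally show ?thesis .
  qed (auto simp: indicator_def)
  have "(\<integral>\<^sup>+x. ennreal (norm (indicator (- cball 0 1) (x::'a) * norm x powr s)) \<partial>lborel)
      \<le> (\<integral>\<^sup>+x. (\<Sum>j. ennreal (\<rho> ^ j) * indicator (cball (0::'a) (2 * 2 ^ j)) x) \<partial>lborel)"
    by (intro nn_integral_mono) (use bound in \<open>simp add: abs_mult\<close>)
  also have "\<dots> < \<infinity>"
    using nn_integral_geometric_cballs_finite[where 'a='a, of \<rho> 2 2] \<rho> by simp
  finally show ?thesis
    by (intro integrableI_bounded) measurable
qed

definition two_sided_power :: "real \<Rightarrow> real \<Rightarrow> 'a::euclidean_space \<Rightarrow> real" where
  "two_sided_power s1 s2 x = indicator (cball 0 1) x * norm x powr s1 + indicator (- cball 0 1) x * norm x powr s2"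

lemma two_sided_power_nonneg: "0 \<le> two_sided_power s1 s2 x"
  by (simp add: two_sided_power_def indicator_def)

lemma integrable_two_sided_power:
  "- real DIM('a) < s1 \<Longrightarrow> s2 < - real DIM('a) \<Longrightarrow>
    integrable lborel (two_sided_power s1 s2 :: 'a::euclidean_space \<Rightarrow> real)"
  unfolding two_sided_power_def[abs_def]
  by (intro Bochner_Integration.integrable_add integrable_norm_powr_cball integrable_norm_powr_outside_cball)

section \<open>The density of mu_S\<close>

definition weightS :: "real^'n \<Rightarrow> real \<Rightarrow> real \<Rightarrow> real^'n \<Rightarrow> real" where
  "weightS A a b x = indicator (Rstar A) x * phiS A a b x powr (- nS A a b)
     * norm x powr (- b * pS A a b) * xpow A x"

definition thetaS :: "real^'n \<Rightarrow> real \<Rightarrow> real \<Rightarrow> real^'n \<Rightarrow> real" where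
  "thetaS A a b x = phiS A a b x ^ 2 * norm x powr (-2 * alphaS A a b)"

lemma phiS_ge: "1/2 \<le> phiS A a b x" "norm x powr (2 * alphaS A a b) / 2 \<le> phiS A a b x"
  unfolding phiS_def by auto

lemma phiS_pos: "0 < phiS A a b x"
  using phiS_ge(1)[of A a b x] by linarith

lemma Rstar_eq_Inter: "Rstar A = (\<Inter>i\<in>{i. 0 < A$i}. {x. 0 < x$i})"
  unfolding Rstar_def by auto

lemma open_Rstar: "open (Rstar A)"
  unfolding Rstar_eq_Inter by (intro open_INT) (auto intro!: open_Collect_less continuous_intros)

lemma borel_measurable_phiS [measurable]: "phiS A a b \<in> borel_measurable borel"
  unfolding phiS_def[abs_def] by measurable

lemma borel_measurable_weightS [measurable]: "weightS A a b \<in> borel_measurable borel"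
proof -
  have [measurable]: "Rstar A \<in> sets borel" using open_Rstar by (rule borel_open)
  show ?thesis unfolding weightS_def[abs_def] xpow_def[abs_def] by measurable
qed

lemma borel_measurable_thetaS [measurable]: "thetaS A a b \<in> borel_measurable borel"
  unfolding thetaS_def[abs_def] by measurable

lemma xpow_nonneg: "0 \<le> xpow A x"
  unfolding xpow_def by (intro prod_nonneg) auto

lemma xpow_le_norm_powr:
  assumes A: "\<forall>i. 0 \<le> A$i" and x: "x \<noteq> 0"
  shows "xpow A x \<le> norm x powr (\<Sum>i\<in>UNIV. A$i)"
proof -
  have "xpow A x \<le> (\<Prod>i\<in>UNIV. norm x powr (A$i))"
    unfolding xpow_def
  proof (rule prod_mono)
    fix i
    have "\<bar>x$i\<bar> powr (A$i) \<le> norm x powr (A$i)"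
      using A component_le_norm_cart[of x i] by (intro powr_mono2) auto
    then show "0 \<le> (if A$i = 0 then 1 else \<bar>x$i\<bar> powr (A$i))
        \<and> (if A$i = 0 then 1 else \<bar>x$i\<bar> powr (A$i)) \<le> norm x powr (A$i)"
      using x by auto
  qed
  also have "\<dots> = norm x powr (\<Sum>i\<in>UNIV. A$i)"
    by (rule powr_sum[symmetric]) (use x in simp)
  finally show ?thesis .
qed

lemma weightS_nonneg: "0 \<le> weightS A a b x"
  unfolding weightS_def by (simp add: xpow_nonneg)

lemma weightS_le:
  assumes "\<forall>i. 0 \<le> A$i" and "x \<noteq> 0"
  shows "weightS A a b x \<le> phiS A a b x powr (- nS A a b) * norm x powr ((\<Sum>i\<in>UNIV. A$i) - b * pS A a b)"
proof -
  have "weightS A a b x \<le> 1 * phiS A a b x powr (- nS A a b) * norm x powr (- b * pS A a b)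
      * norm x powr (\<Sum>i\<in>UNIV. A$i)"
    unfolding weightS_def
    by (intro mult_mono xpow_le_norm_powr[OF assms]) (auto simp: indicator_def xpow_nonneg)
  moreover have "(\<Sum>i\<in>UNIV. A$i) - b * pS A a b = - b * pS A a b + (\<Sum>i\<in>UNIV. A$i)" by simp
  ultimately show ?thesis by (simp only: powr_add mult_ac mult_1)
qed

lemma nn_integral_muS:
  assumes [measurable]: "g \<in> borel_measurable borel"
  shows "(\<integral>\<^sup>+x. ennreal (g x) \<partial>muS A a b) = (\<integral>\<^sup>+x. ennreal (weightS A a b x * g x) \<partial>lborel)"
proof -
  have w: "(\<lambda>x. ennreal (weightS A a b x)) \<in> borel_measurable lebesgue"
    by (rule measurable_completion) simp
  have "(\<integral>\<^sup>+x. ennreal (g x) \<partial>muS A a b) = (\<integral>\<^sup>+x. ennreal (weightS A a b x) * ennreal (g x) \<partial>lebesgue)"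
    unfolding muS_def weightS_def[symmetric]
    by (rule nn_integral_density[OF w]) (rule measurable_completion, simp)
  also have "\<dots> = (\<integral>\<^sup>+x. ennreal (weightS A a b x * g x) \<partial>lborel)"
    by (simp add: ennreal_mult' weightS_nonneg nn_integral_completion)
  finally show ?thesis .
qed

lemma AE_muS: "AE x in muS A a b. x \<in> Rstar A \<and> x \<noteq> 0"
proof -
  have w: "(\<lambda>x. ennreal (weightS A a b x)) \<in> borel_measurable lebesgue"
    by (rule measurable_completion) simp
  have "weightS A a b x = 0" if "x \<notin> Rstar A \<or> x = 0" for x
    using that by (auto simp: weightS_def)
  then show ?thesis
    unfolding muS_def weightS_def[symmetric] AE_density[OF w] by (intro AE_I2) fastforce
qed

lemma borel_measurable_muS: "f \<in> borel_measurable borel \<Longrightarrow> f \<in> borel_measurable (muS A a b)"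
  unfolding muS_def by (simp add: measurable_completion)

lemma phiS_powr_le:
  assumes t: "t \<le> 0"
  shows "phiS A a b x powr t \<le> 2 powr (- t)"
    and "x \<noteq> 0 \<Longrightarrow> phiS A a b x powr t \<le> 2 powr (- t) * norm x powr (2 * alphaS A a b * t)"
proof -
  have "phiS A a b x powr t \<le> (1/2) powr t"
    using phiS_ge(1) t by (intro powr_mono2') auto
  also have "(1/2) powr t = 2 powr (- t)"
    by (simp add: powr_divide powr_minus inverse_eq_divide)
  finally show "phiS A a b x powr t \<le> 2 powr (- t)" .
  assume x: "x \<noteq> 0"
  have "phiS A a b x powr t \<le> (norm x powr (2 * alphaS A a b) / 2) powr t"
    using phiS_ge(2) t x by (intro powr_mono2') auto
  also have "\<dots> = norm x powr (2 * alphaS A a b * t) / 2 powr t"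
    by (simp add: powr_divide powr_powr)
  also have "\<dots> = 2 powr (- t) * norm x powr (2 * alphaS A a b * t)"
    by (simp add: powr_minus field_simps)
  finally show "phiS A a b x powr t \<le> 2 powr (- t) * norm x powr (2 * alphaS A a b * t)" .
qed

lemma thetaS_power_eq:
  assumes x: "x \<noteq> 0"
  shows "thetaS A a b x ^ m = phiS A a b x powr (2 * real m) * norm x powr (-2 * alphaS A a b * real m)"
proof -
  have "thetaS A a b x ^ m = phiS A a b x ^ (2 * m) * (norm x powr (-2 * alphaS A a b)) ^ m"
    by (simp add: thetaS_def power_mult_distrib power_mult)
  also have "phiS A a b x ^ (2 * m) = phiS A a b x powr (2 * real m)"
    using powr_realpow[OF phiS_pos[of A a b x], of "2 * m"] by simp
  also have "(norm x powr (-2 * alphaS A a b)) ^ m = norm x powr (-2 * alphaS A a b * real m)"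
    using x by (simp add: powr_power mult_ac)
  finally show ?thesis .
qed

lemma weightS_thetaS_power_le:
  fixes A :: "real^'n"
  assumes A: "\<forall>i. 0 \<le> A$i" and m: "2 * real m \<le> nS A a b"
  defines "s \<equiv> (\<Sum>i\<in>UNIV. A$i) - b * pS A a b - 2 * alphaS A a b * real m"
  shows "weightS A a b x * thetaS A a b x ^ m
    \<le> 2 powr (nS A a b - 2 * real m)
       * two_sided_power s (s + 2 * alphaS A a b * (2 * real m - nS A a b)) x"
proof (cases "x = 0")
  case True
  have "0 \<le> 2 powr (nS A a b - 2 * real m)
      * two_sided_power s (s + 2 * alphaS A a b * (2 * real m - nS A a b)) x"
    by (intro mult_nonneg_nonneg two_sided_power_nonneg) simp
  then show ?thesis using True by (simp add: weightS_def)
next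
  case x: False
  let ?t = "2 * real m - nS A a b"
  have theta_power: "thetaS A a b x ^ m
      = phiS A a b x powr (2 * real m) * norm x powr (-2 * alphaS A a b * real m)"
    using thetaS_power_eq[OF x] .
  have "weightS A a b x * thetaS A a b x ^ m
      \<le> phiS A a b x powr (- nS A a b) * norm x powr ((\<Sum>i\<in>UNIV. A$i) - b * pS A a b)
        * (phiS A a b x powr (2 * real m) * norm x powr (-2 * alphaS A a b * real m))"
    unfolding theta_power by (rule mult_right_mono[OF weightS_le[OF A x]]) simp
  also have "\<dots> = phiS A a b x powr ?t * norm x powr s"
    by (simp add: s_def powr_add[symmetric] algebra_simps)
  also have "\<dots> \<le> 2 powr (- ?t) * two_sided_power s (s + 2 * alphaS A a b * ?t) x"
  proof (cases "norm x \<le> 1")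
    case True
    then show ?thesis
      using phiS_powr_le(1)[where t = "2 * real m - nS A a b" and A = A and a = a and b = b and x = x] m by (simp add: two_sided_power_def mult_right_mono)
  next
    case False
    have "phiS A a b x powr ?t * norm x powr s
        \<le> 2 powr (- ?t) * norm x powr (2 * alphaS A a b * ?t) * norm x powr s"
      using phiS_powr_le(2)[where t = "2 * real m - nS A a b" and A = A and a = a and b = b and x = x] m x by (intro mult_right_mono) auto
    then show ?thesis using False by (simp add: two_sided_power_def powr_add mult_ac)
  qed
  finally show ?thesis by simp
qed

locale muS_parameters =
  fixes A :: "real^'n" and a b :: real
  assumes card_ge_2: "CARD('n) \<ge> 2"
    and weights_nonneg: "\<forall>i. 0 \<le> A$i"
    and gap_nonneg: "0 \<le> b - a" and gap_less_1: "b - a < 1"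
    and a_less: "a < (DD A - 2) / 2"
    and nS_gt_2: "2 < nS A a b"
begin

lemma alphaS_mult_nS: "alphaS A a b * nS A a b = DD A - b * pS A a b"
  and alphaS_pos: "0 < alphaS A a b"
proof -
  define D c E where "D = DD A" and "c = b - a" and "E = D - 2 + 2 * c"
  have "0 \<le> (\<Sum>i\<in>UNIV. A$i)" using weights_nonneg by (simp add: sum_nonneg)
  then have D2: "2 \<le> D" using card_ge_2 unfolding D_def DD_def by linarith
  have p: "pS A a b = 2 * D / E" by (simp add: pS_def D_def E_def c_def)
  have "E \<noteq> 0"
  proof
    assume "E = 0"
    then have "nS A a b = 0" by (simp add: nS_def p)
    then show False using nS_gt_2 by simp
  qed
  then have E: "0 < E" using D2 gap_nonneg by (simp add: E_def c_def)
  have c: "0 < 1 - c" using gap_less_1 by (simp add: c_def)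
  have p2: "pS A a b - 2 = 4 * (1 - c) / E" using E unfolding p E_def by (simp add: field_simps)
  have n: "nS A a b = D / (1 - c)"
    unfolding nS_def p2 using E c by (simp add: p field_simps)
  have key: "(1 + a) * E - b * D = (E - 2 * b) * (1 - c)" unfolding E_def c_def by algebra
  have "alphaS A a b * nS A a b = ((1 + a) * E - b * D) * D / (E * (1 - c))"
    using E c by (simp add: alphaS_def n p field_simps)
  also have "\<dots> = (E - 2 * b) * D / E"
    unfolding key using E c by simp
  also have "\<dots> = DD A - b * pS A a b"
    using E by (simp add: p D_def field_simps)
  finally show an: "alphaS A a b * nS A a b = DD A - b * pS A a b" .
  have "DD A - b * pS A a b = D * (D - 2 - 2 * a) / E"
    using E by (simp add: p D_def[symmetric] E_def c_def field_simps)
  also have "\<dots> > 0" using E D2 a_less by (simp add: D_def)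
  finally have "0 < alphaS A a b * nS A a b" using an by simp
  then show "0 < alphaS A a b" by (rule zero_less_mult_pos2) (use nS_gt_2 in simp)
qed

lemma nn_integral_thetaS_power_finite:
  assumes m: "2 * real m < nS A a b"
  shows "(\<integral>\<^sup>+x. ennreal (thetaS A a b x ^ m) \<partial>muS A a b) < \<infinity>"
proof -
  define s where "s = (\<Sum>i\<in>UNIV. A$i) - b * pS A a b - 2 * alphaS A a b * real m"
  define M where "M = (\<lambda>x::real^'n. 2 powr (nS A a b - 2 * real m)
      * two_sided_power s (s + 2 * alphaS A a b * (2 * real m - nS A a b)) x)"
  have s: "s + real CARD('n) = alphaS A a b * (nS A a b - 2 * real m)"
    using alphaS_mult_nS by (simp add: s_def DD_def algebra_simps)
  have "0 < alphaS A a b * (nS A a b - 2 * real m)"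
    using alphaS_pos m by simp
  moreover have "2 * alphaS A a b * (2 * real m - nS A a b) = - 2 * (alphaS A a b * (nS A a b - 2 * real m))"
    by (simp add: algebra_simps)
  ultimately have "- real DIM(real^'n) < s" "s + 2 * alphaS A a b * (2 * real m - nS A a b) < - real DIM(real^'n)"
    using s by simp_all
  then have "integrable lborel M"
    unfolding M_def by (intro Bochner_Integration.integrable_mult_right integrable_two_sided_power)
  then have "(\<integral>\<^sup>+x. ennreal (M x) \<partial>lborel) < \<infinity>"
    using integrableD(2) by (simp add: less_top)
  moreover have "(\<integral>\<^sup>+x. ennreal (thetaS A a b x ^ m) \<partial>muS A a b) \<le> (\<integral>\<^sup>+x. ennreal (M x) \<partial>lborel)"
  proof -
    have "weightS A a b x * thetaS A a b x ^ m \<le> M x" for x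
      unfolding M_def s_def using weightS_thetaS_power_le[OF weights_nonneg] m by simp
    then show ?thesis
      unfolding nn_integral_muS[OF borel_measurable_power[OF borel_measurable_thetaS]]
      by (intro nn_integral_mono ennreal_leI)
  qed
  ultimately show ?thesis by (rule le_less_trans[rotated])
qed

end

section \<open>Gamma_S and L_S on radial functions\<close>

lemma has_derivative_inner_self:
  "((\<lambda>y. y \<bullet> y) has_derivative (\<lambda>v. 2 * (x \<bullet> v))) (at x)"
  using has_derivative_inner[OF has_derivative_ident has_derivative_ident, of x]
  by (simp add: inner_commute)

lemma pderiv_radial:
  fixes x :: "real^'n"
  assumes "(h has_real_derivative h') (at (x \<bullet> x))"
  shows "pderiv i (\<lambda>y. h (y \<bullet> y) - d) x = 2 * h' * x$i"
proof -
  have "((\<lambda>y. h (y \<bullet> y) - d) has_derivative (\<lambda>v. 2 * (x \<bullet> v) * h' - 0)) (at x)"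
    by (intro has_derivative_diff has_derivative_const DERIV_compose_FDERIV[OF assms has_derivative_inner_self])
  then show ?thesis
    unfolding pderiv_def by (simp add: frechet_derivative_at[symmetric] inner_axis)
qed

lemma norm_powr_two_mult:
  "norm x powr (2 * (1 - t)) = (x \<bullet> x) * norm x powr (-2 * t)"
proof (cases "x = 0")
  case False
  have "2 * (1 - t) = 2 + (-2 * t)" by simp
  then have "norm x powr (2 * (1 - t)) = norm x powr 2 * norm x powr (-2 * t)"
    by (simp only: powr_add)
  then show ?thesis using False by (simp add: powr_numeral power2_norm_eq_inner)
qed simp

lemma GammaS_radial:
  fixes x :: "real^'n"
  assumes "(h has_real_derivative h') (at (x \<bullet> x))"
  shows "GammaS A a b (\<lambda>y. h (y \<bullet> y) - d) (\<lambda>y. h (y \<bullet> y) - d) x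
    = 4 * thetaS A a b x * ((x \<bullet> x) * h')\<^sup>2"
proof -
  have "(\<Sum>i\<in>UNIV. pderiv i (\<lambda>y. h (y \<bullet> y) - d) x * pderiv i (\<lambda>y. h (y \<bullet> y) - d) x)
      = 4 * h'\<^sup>2 * (\<Sum>i\<in>UNIV. x$i * x$i)"
    by (simp add: pderiv_radial[OF assms] sum_distrib_left power2_eq_square mult_ac)
  also have "(\<Sum>i\<in>UNIV. x$i * x$i) = x \<bullet> x"
    by (simp add: inner_vec_def)
  finally show ?thesis
    unfolding GammaS_def thetaS_def norm_powr_two_mult by (simp add: power2_eq_square mult_ac)
qed

definition xpow_log_deriv :: "real^'n \<Rightarrow> real^'n \<Rightarrow> 'n \<Rightarrow> real" where
  "xpow_log_deriv A x j = (if A$j = 0 then 0 else A$j / x$j)"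

lemma Rstar_component_pos:
  assumes "\<forall>i. 0 \<le> A$i" and "x \<in> Rstar A" and "A$j \<noteq> 0"
  shows "0 < x$j"
proof -
  have "0 < A$j" using assms(1,3) by (metis order.not_eq_order_implies_strict)
  then show ?thesis using assms(2) unfolding Rstar_def by blast
qed

lemma xpow_eq_exp:
  assumes A: "\<forall>i. 0 \<le> A$i" and y: "y \<in> Rstar A"
  shows "xpow A y = exp (\<Sum>j\<in>UNIV. if A$j = 0 then 0 else A$j * ln (y$j))"
proof -
  have "(if A$j = 0 then 1 else \<bar>y$j\<bar> powr (A$j)) = exp (if A$j = 0 then 0 else A$j * ln (y$j))" for j
  proof (cases "A$j = 0")
    case False
    then have "0 < y$j" by (rule Rstar_component_pos[OF A y])
    then show ?thesis using False by (simp add: powr_def mult.commute)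
  qed simp
  then show ?thesis unfolding xpow_def by (simp add: exp_sum)
qed

lemma xpow_pos: "\<forall>i. 0 \<le> A$i \<Longrightarrow> x \<in> Rstar A \<Longrightarrow> 0 < xpow A x"
  by (simp add: xpow_eq_exp)

lemma has_derivative_xpow:
  assumes A: "\<forall>i. 0 \<le> A$i" and x: "x \<in> Rstar A"
  shows "(xpow A has_derivative (\<lambda>v. xpow A x * (\<Sum>j\<in>UNIV. xpow_log_deriv A x j * v$j))) (at x)"
proof -
  let ?L = "\<lambda>y. \<Sum>j\<in>UNIV. if A$j = 0 then 0 else A$j * ln (y$j)"
  have "((\<lambda>y. if A$j = 0 then 0 else A$j * ln (y$j)) has_derivative (\<lambda>v. xpow_log_deriv A x j * v$j)) (at x)"
    for j
  proof (cases "A$j = 0")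
    case False
    have "((\<lambda>y. ln (y$j)) has_derivative (\<lambda>v. v$j * inverse (x$j))) (at x)"
      using Rstar_component_pos[OF A x False]
      by (intro DERIV_compose_FDERIV[OF DERIV_ln] bounded_linear_imp_has_derivative bounded_linear_vec_nth)
    from has_derivative_mult_right[OF this, of "A$j"] False show ?thesis
      by (simp add: xpow_log_deriv_def divide_inverse mult_ac)
  qed (simp add: xpow_log_deriv_def)
  then have "(?L has_derivative (\<lambda>v. \<Sum>j\<in>UNIV. xpow_log_deriv A x j * v$j)) (at x)"
    by (rule has_derivative_sum)
  from DERIV_compose_FDERIV[OF DERIV_exp this]
  have "((\<lambda>y. exp (?L y)) has_derivative (\<lambda>v. xpow A x * (\<Sum>j\<in>UNIV. xpow_log_deriv A x j * v$j))) (at x)"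
    using xpow_eq_exp[OF A x] by (simp add: mult.commute)
  then show ?thesis
    by (rule has_derivative_transform_within_open[OF _ open_Rstar x]) (simp add: xpow_eq_exp[OF A])
qed

lemma sum_xpow_log_deriv:
  assumes A: "\<forall>i. 0 \<le> A$i" and x: "x \<in> Rstar A"
  shows "(\<Sum>j\<in>UNIV. xpow_log_deriv A x j * x$j) = (\<Sum>j\<in>UNIV. A$j)"
proof -
  have "xpow_log_deriv A x j * x$j = A$j" for j
  proof (cases "A$j = 0")
    case False
    then show ?thesis using Rstar_component_pos[OF A x False] by (simp add: xpow_log_deriv_def)
  qed (simp add: xpow_log_deriv_def)
  then show ?thesis by simp
qed

lemma has_derivative_norm_powr:
  fixes x :: "real^'n"
  assumes x: "x \<noteq> 0"
  shows "((\<lambda>y. norm y powr t) has_derivative (\<lambda>v. t * norm x powr t * (x \<bullet> v) / (x \<bullet> x))) (at x)"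
proof -
  have norm_eq: "norm y powr t = (y \<bullet> y) powr (t / 2)" for y :: "real^'n"
    by (simp add: norm_eq_sqrt_inner powr_half_sqrt[symmetric] powr_powr)
  have "((\<lambda>y. (y \<bullet> y) powr (t / 2)) has_derivative
      (\<lambda>v. (x \<bullet> x) powr (t / 2) * (0 * ln (x \<bullet> x) + 2 * (x \<bullet> v) * (t / 2) / (x \<bullet> x)))) (at x)"
    using x by (intro has_derivative_powr[OF has_derivative_inner_self has_derivative_const]) auto
  then show ?thesis unfolding norm_eq by (simp add: mult_ac)
qed

lemma has_derivative_phiS:
  fixes x :: "real^'n"
  assumes "x \<noteq> 0"
  shows "(phiS A a b has_derivative
    (\<lambda>v. alphaS A a b * norm x powr (2 * alphaS A a b) * (x \<bullet> v) / (x \<bullet> x))) (at x)"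
proof -
  have "((\<lambda>y. (1 + norm y powr (2 * alphaS A a b)) / 2) has_derivative
      (\<lambda>v. ((0 + 2 * alphaS A a b * norm x powr (2 * alphaS A a b) * (x \<bullet> v) / (x \<bullet> x)) * 2
        - (1 + norm x powr (2 * alphaS A a b)) * 0) / (2 * 2))) (at x)"
    by (rule has_derivative_divide' has_derivative_add has_derivative_const
        has_derivative_norm_powr assms | simp)+
  then show ?thesis
    unfolding phiS_def[abs_def] by (rule has_derivative_eq_rhs) (simp add: fun_eq_iff)
qed

definition LS_weight :: "real^'n \<Rightarrow> real \<Rightarrow> real \<Rightarrow> real^'n \<Rightarrow> real" where
  "LS_weight A a b y = phiS A a b y powr (2 - nS A a b)
     * norm y powr (2 * (1 - alphaS A a b) - b * pS A a b) * xpow A y"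

text \<open>\<open>kappaS x\<close> is the radial logarithmic derivative \<open>x \<bullet> \<nabla> log W\<close> of the weight
  \<open>W = LS_weight\<close> appearing in the divergence form of \<open>L\<^sub>S\<close>.\<close>
definition kappaS :: "real^'n \<Rightarrow> real \<Rightarrow> real \<Rightarrow> real^'n \<Rightarrow> real" where
  "kappaS A a b x = (2 - nS A a b) * alphaS A a b * norm x powr (2 * alphaS A a b) / phiS A a b x
     + (2 * (1 - alphaS A a b) - b * pS A a b) + (\<Sum>j\<in>UNIV. A$j)"

lemma borel_measurable_kappaS [measurable]: "kappaS A a b \<in> borel_measurable borel"
  unfolding kappaS_def[abs_def] by measurable

lemma has_derivative_mult_logarithmic:
  fixes f g :: "'a::real_normed_vector \<Rightarrow> real"
  assumes "(f has_derivative (\<lambda>v. f x * F v)) (at x)" and "(g has_derivative (\<lambda>v. g x * G v)) (at x)"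
  shows "((\<lambda>y. f y * g y) has_derivative (\<lambda>v. f x * g x * (F v + G v))) (at x)"
  using has_derivative_mult[OF assms] by (rule has_derivative_eq_rhs) (simp add: fun_eq_iff algebra_simps)

lemma has_derivative_LS_weight:
  fixes A x :: "real^'n" and a b :: real
  assumes A: "\<forall>i. 0 \<le> A$i" and xR: "x \<in> Rstar A" and x: "x \<noteq> 0"
  defines "K \<equiv> (2 - nS A a b) * alphaS A a b * norm x powr (2 * alphaS A a b) / phiS A a b x"
  shows "(LS_weight A a b has_derivative (\<lambda>v. LS_weight A a b x
     * ((K + (2 * (1 - alphaS A a b) - b * pS A a b)) * ((x \<bullet> v) / (x \<bullet> x))
        + (\<Sum>j\<in>UNIV. xpow_log_deriv A x j * v$j)))) (at x)"
proof -
  let ?n = "nS A a b" and ?\<alpha> = "alphaS A a b" and ?\<gamma> = "2 * (1 - alphaS A a b) - b * pS A a b"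
  let ?\<phi> = "phiS A a b x"
  have \<phi>: "0 < ?\<phi>" by (rule phiS_pos)
  have "((\<lambda>y. phiS A a b y powr (2 - ?n)) has_derivative (\<lambda>v. ?\<phi> powr (2 - ?n) *
      (0 * ln ?\<phi> + ?\<alpha> * norm x powr (2 * ?\<alpha>) * (x \<bullet> v) / (x \<bullet> x) * (2 - ?n) / ?\<phi>))) (at x)"
    using \<phi> by (intro has_derivative_powr has_derivative_phiS x has_derivative_const) auto
  then have d1: "((\<lambda>y. phiS A a b y powr (2 - ?n)) has_derivative
      (\<lambda>v. ?\<phi> powr (2 - ?n) * (K * ((x \<bullet> v) / (x \<bullet> x))))) (at x)"
    by (rule has_derivative_eq_rhs) (use \<phi> x in \<open>simp add: fun_eq_iff K_def field_simps\<close>)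
  have d2: "((\<lambda>y. norm y powr ?\<gamma>) has_derivative (\<lambda>v. norm x powr ?\<gamma> * (?\<gamma> * ((x \<bullet> v) / (x \<bullet> x))))) (at x)"
    using has_derivative_norm_powr[OF x, of ?\<gamma>] by (rule has_derivative_eq_rhs) (simp add: fun_eq_iff)
  from has_derivative_mult_logarithmic[OF has_derivative_mult_logarithmic[OF d1 d2] has_derivative_xpow[OF A xR]]
  show ?thesis
    unfolding LS_weight_def[abs_def]
    by (rule has_derivative_eq_rhs) (simp add: fun_eq_iff distrib_right add_divide_distrib)
qed

lemma GammaS_const: "GammaS A a b (\<lambda>x. c) (\<lambda>x. c) x = 0"
proof -
  have "pderiv i (\<lambda>x. c) x = 0" for i
    unfolding pderiv_def by (simp add: frechet_derivative_at[OF has_derivative_const, symmetric])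
  then show ?thesis by (simp add: GammaS_def)
qed

lemma sum_mult_axis: "(\<Sum>j\<in>UNIV. f j * axis i (1::real) $ j) = f i"
proof -
  have "(\<Sum>j\<in>UNIV. f j * axis i (1::real) $ j) = (\<Sum>j\<in>UNIV. if j = i then f j else 0)"
    by (rule sum.cong) (auto simp: axis_def)
  then show ?thesis by simp
qed

lemma pderiv_LS_flux_radial:
  fixes A x :: "real^'n" and a b :: real
  assumes A: "\<forall>i. 0 \<le> A$i" and xR: "x \<in> Rstar A" and x: "x \<noteq> 0"
    and h': "\<And>s. (h has_real_derivative h' s) (at s)" and h'': "\<And>s. (h' has_real_derivative h'' s) (at s)"
  defines "K \<equiv> (2 - nS A a b) * alphaS A a b * norm x powr (2 * alphaS A a b) / phiS A a b x
      + (2 * (1 - alphaS A a b) - b * pS A a b)"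
  shows "pderiv i (\<lambda>y. LS_weight A a b y * pderiv i (\<lambda>y. h (y \<bullet> y)) y) x
    = LS_weight A a b x * (2 * h' (x \<bullet> x) + 4 * h'' (x \<bullet> x) * (x$i * x$i)
        + 2 * h' (x \<bullet> x) * K / (x \<bullet> x) * (x$i * x$i) + 2 * h' (x \<bullet> x) * (xpow_log_deriv A x i * x$i))"
proof -
  let ?s = "x \<bullet> x"
  have "pderiv i (\<lambda>y. h (y \<bullet> y)) y = 2 * h' (y \<bullet> y) * y$i" for y :: "real^'n"
    using pderiv_radial[of h "h' (y \<bullet> y)" y i 0] h' by simp
  then have flux: "(\<lambda>y. LS_weight A a b y * pderiv i (\<lambda>y. h (y \<bullet> y)) y)
      = (\<lambda>y. LS_weight A a b y * (2 * h' (y \<bullet> y) * y$i))"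
    by simp
  have "((\<lambda>y. 2 * h' (y \<bullet> y)) has_derivative (\<lambda>v. 2 * (2 * (x \<bullet> v) * h'' ?s))) (at x)"
    by (intro has_derivative_mult_right DERIV_compose_FDERIV[OF h'' has_derivative_inner_self])
  from has_derivative_mult[OF this bounded_linear_imp_has_derivative[OF bounded_linear_vec_nth[of i]]]
  have "((\<lambda>y. 2 * h' (y \<bullet> y) * y$i) has_derivative
      (\<lambda>v. 2 * h' ?s * v$i + 2 * (2 * (x \<bullet> v) * h'' ?s) * x$i)) (at x)" .
  note D = has_derivative_mult[OF has_derivative_LS_weight[where a = a and b = b, OF A xR x] this]
  have "pderiv i (\<lambda>y. LS_weight A a b y * (2 * h' (y \<bullet> y) * y$i)) x
      = LS_weight A a b x * (2 * h' ?s * axis i 1 $ i + 2 * (2 * (x \<bullet> axis i 1) * h'' ?s) * x$i)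
        + LS_weight A a b x * (K * ((x \<bullet> axis i 1) / ?s)
        + (\<Sum>j\<in>UNIV. xpow_log_deriv A x j * axis i 1 $ j)) * (2 * h' ?s * x$i)"
    unfolding pderiv_def K_def by (simp only: frechet_derivative_at[OF D, symmetric])
  also have "\<dots> = LS_weight A a b x * (2 * h' ?s + 2 * (2 * x$i * h'' ?s) * x$i)
        + LS_weight A a b x * (K * (x$i / ?s) + xpow_log_deriv A x i) * (2 * h' ?s * x$i)"
    by (simp add: inner_axis sum_mult_axis)
  finally have "pderiv i (\<lambda>y. LS_weight A a b y * (2 * h' (y \<bullet> y) * y$i)) x
      = LS_weight A a b x * (2 * h' ?s + 2 * (2 * x$i * h'' ?s) * x$i)
        + LS_weight A a b x * (K * (x$i / ?s) + xpow_log_deriv A x i) * (2 * h' ?s * x$i)" .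
  then show ?thesis
    unfolding flux by (simp add: algebra_simps)
qed

lemma LS_weight_prefactor:
  fixes A x :: "real^'n"
  assumes A: "\<forall>i. 0 \<le> A$i" and xR: "x \<in> Rstar A"
  shows "phiS A a b x powr nS A a b * norm x powr (b * pS A a b) / xpow A x * LS_weight A a b x
    = thetaS A a b x * (x \<bullet> x)"
proof -
  let ?W = "LS_weight A a b x" and ?s = "x \<bullet> x"
  have "phiS A a b x powr nS A a b * norm x powr (b * pS A a b) / xpow A x * ?W
      = phiS A a b x powr nS A a b * phiS A a b x powr (2 - nS A a b)
        * (norm x powr (b * pS A a b) * norm x powr (2 * (1 - alphaS A a b) - b * pS A a b))"
    using xpow_pos[OF A xR] by (simp add: LS_weight_def field_simps)
  also have "\<dots> = thetaS A a b x * ?s"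
  proof -
    have "norm x powr (2 - 2 * alphaS A a b) = ?s * norm x powr (- (2 * alphaS A a b))"
      using norm_powr_two_mult[of x "alphaS A a b"] by simp
    then show ?thesis
      using phiS_pos[of A a b x] by (simp add: powr_add[symmetric] powr_numeral thetaS_def)
  qed
  finally show ?thesis .
qed

lemma LS_radial:
  fixes A x :: "real^'n" and a b :: real
  assumes A: "\<forall>i. 0 \<le> A$i" and xR: "x \<in> Rstar A" and x: "x \<noteq> 0"
    and h': "\<And>s. (h has_real_derivative h' s) (at s)" and h'': "\<And>s. (h' has_real_derivative h'' s) (at s)"
  shows "LS A a b (\<lambda>y. h (y \<bullet> y)) x = thetaS A a b x
    * (2 * ((x \<bullet> x) * h' (x \<bullet> x)) * (kappaS A a b x + real CARD('n)) + 4 * ((x \<bullet> x)\<^sup>2 * h'' (x \<bullet> x)))"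
proof -
  let ?s = "x \<bullet> x" and ?W = "LS_weight A a b x"
  define K where "K = (2 - nS A a b) * alphaS A a b * norm x powr (2 * alphaS A a b) / phiS A a b x
      + (2 * (1 - alphaS A a b) - b * pS A a b)"
  have s: "0 < ?s" using x by simp
  have sum_sq: "(\<Sum>i\<in>UNIV. x$i * x$i) = ?s" by (simp add: inner_vec_def)
  have flux: "pderiv i (\<lambda>y. phiS A a b y powr (2 - nS A a b) * norm y powr (2 * (1 - alphaS A a b) - b * pS A a b)
      * xpow A y * pderiv i (\<lambda>y. h (y \<bullet> y)) y) x
    = ?W * (2 * h' ?s + 4 * h'' ?s * (x$i * x$i) + 2 * h' ?s * K / ?s * (x$i * x$i)
        + 2 * h' ?s * (xpow_log_deriv A x i * x$i))" for i
    using pderiv_LS_flux_radial[where a = a and b = b and i = i, OF A xR x h' h''] unfolding LS_weight_def K_def .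
  have "(\<Sum>i\<in>UNIV. ?W * (2 * h' ?s + 4 * h'' ?s * (x$i * x$i) + 2 * h' ?s * K / ?s * (x$i * x$i)
        + 2 * h' ?s * (xpow_log_deriv A x i * x$i)))
      = ?W * (real CARD('n) * (2 * h' ?s) + 4 * h'' ?s * (\<Sum>i\<in>UNIV. x$i * x$i)
        + 2 * h' ?s * K / ?s * (\<Sum>i\<in>UNIV. x$i * x$i) + 2 * h' ?s * (\<Sum>i\<in>UNIV. xpow_log_deriv A x i * x$i))"
    by (simp add: sum.distrib sum_distrib_left[symmetric] sum_divide_distrib[symmetric])
  also have "\<dots> = ?W * (real CARD('n) * (2 * h' ?s) + 4 * h'' ?s * ?s + 2 * h' ?s * K
        + 2 * h' ?s * (\<Sum>i\<in>UNIV. A$i))"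
    using s by (simp add: sum_sq sum_xpow_log_deriv[OF A xR])
  finally have sum: "(\<Sum>i\<in>UNIV. ?W * (2 * h' ?s + 4 * h'' ?s * (x$i * x$i) + 2 * h' ?s * K / ?s * (x$i * x$i)
        + 2 * h' ?s * (xpow_log_deriv A x i * x$i)))
      = ?W * (2 * h' ?s * (K + (\<Sum>i\<in>UNIV. A$i) + real CARD('n)) + 4 * h'' ?s * ?s)"
    by (simp add: algebra_simps)
  have prefactor: "phiS A a b x powr nS A a b * norm x powr (b * pS A a b) / xpow A x * ?W
      = thetaS A a b x * ?s"
    by (rule LS_weight_prefactor[OF A xR])
  have kappa: "kappaS A a b x = K + (\<Sum>i\<in>UNIV. A$i)" by (simp add: kappaS_def K_def)
  have "LS A a b (\<lambda>y. h (y \<bullet> y)) x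
      = phiS A a b x powr nS A a b * norm x powr (b * pS A a b) / xpow A x
        * (?W * (2 * h' ?s * (K + (\<Sum>i\<in>UNIV. A$i) + real CARD('n)) + 4 * h'' ?s * ?s))"
    unfolding LS_def flux sum ..
  also have "\<dots> = thetaS A a b x * ?s * (2 * h' ?s * (K + (\<Sum>i\<in>UNIV. A$i) + real CARD('n)) + 4 * h'' ?s * ?s)"
    unfolding prefactor[symmetric] by (simp only: mult.assoc)
  finally show ?thesis
    unfolding kappa by (simp add: power2_eq_square algebra_simps)
qed

lemma abs_kappaS_le:
  "\<bar>kappaS A a b x\<bar> \<le> 2 * \<bar>(2 - nS A a b) * alphaS A a b\<bar>
     + \<bar>2 * (1 - alphaS A a b) - b * pS A a b\<bar> + \<bar>\<Sum>i\<in>UNIV. A$i\<bar>"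
proof -
  let ?c = "(2 - nS A a b) * alphaS A a b" and ?r = "norm x powr (2 * alphaS A a b) / phiS A a b x"
  let ?\<gamma> = "2 * (1 - alphaS A a b) - b * pS A a b"
  have r0: "0 \<le> ?r" and r2: "?r \<le> 2"
    using phiS_ge(2)[of x A a b] phiS_pos[of A a b x] by (simp_all add: field_simps)
  have "\<bar>?c * ?r\<bar> = \<bar>?c\<bar> * ?r" using r0 by (simp only: abs_mult abs_of_nonneg)
  also have "\<dots> \<le> \<bar>?c\<bar> * 2" using r2 by (rule mult_left_mono) simp
  finally have "\<bar>?c * ?r\<bar> \<le> 2 * \<bar>?c\<bar>" by simp
  moreover have "kappaS A a b x = ?c * ?r + ?\<gamma> + (\<Sum>i\<in>UNIV. A$i)"
    by (simp add: kappaS_def)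
  ultimately show ?thesis
    using abs_triangle_ineq[of "?c * ?r + ?\<gamma>" "\<Sum>i\<in>UNIV. A$i"] abs_triangle_ineq[of "?c * ?r" ?\<gamma>]
    by linarith
qed

section \<open>Approximating the constant function 1\<close>

definition cutoff_seq :: "nat \<Rightarrow> real^'n \<Rightarrow> real" where
  "cutoff_seq k x = cutoff (real k + 1) (x \<bullet> x)"

lemma cutoff_seq_in_A0: "(cutoff_seq k :: real^'n \<Rightarrow> real) \<in> A0"
proof -
  define c where "c = real k + 1"
  have c: "0 < c" by (simp add: c_def)
  have "gen_smooth (\<lambda>x::real^'n. flat (c * (x \<bullet> x) + (-1)) * (exp 1 * flat (1 + (- (1/c)) * (x \<bullet> x))))"
    by (intro gen_smooth_mult gen_smooth_compose[OF flat_in_exp_flat_funs] gen_smooth_add gen_smooth_const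
        gen_smooth_inner_self)
  moreover have "cutoff_seq k = (\<lambda>x::real^'n. flat (c * (x \<bullet> x) + (-1)) * (exp 1 * flat (1 + (- (1/c)) * (x \<bullet> x))))"
    by (simp add: fun_eq_iff cutoff_seq_def cutoff_def c_def)
  ultimately have smooth: "smooth_fun (cutoff_seq k :: real^'n \<Rightarrow> real)"
    by (simp add: gen_smooth_imp_smooth_fun)
  let ?K = "{x::real^'n. 1 / c \<le> x \<bullet> x \<and> x \<bullet> x \<le> c}"
  have "{x::real^'n. cutoff_seq k x \<noteq> 0} \<subseteq> ?K"
    using cutoff_nonzero_bounds[OF c] by (force simp: cutoff_seq_def c_def)
  then have supp: "closure {x::real^'n. cutoff_seq k x \<noteq> 0} \<subseteq> ?K"
    by (rule closure_minimal) (intro closed_Collect_conj closed_Collect_le continuous_intros)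
  have "?K \<subseteq> cball 0 (sqrt c)"
    by (auto simp: norm_eq_sqrt_inner intro: real_sqrt_le_mono)
  then have "bounded (closure {x::real^'n. cutoff_seq k x \<noteq> 0})"
    using supp bounded_subset[OF bounded_cball] by blast
  then have "compact (closure {x::real^'n. cutoff_seq k x \<noteq> 0})"
    by (simp add: compact_eq_bounded_closed)
  moreover have "(0::real^'n) \<notin> ?K" using c by simp
  ultimately show ?thesis unfolding A0_def using smooth supp by blast
qed

lemma borel_measurable_cutoff_seq [measurable]: "cutoff_seq k \<in> borel_measurable borel"
  unfolding cutoff_seq_def[abs_def] by measurable

lemma cutoff_seq_tendsto:
  fixes x :: "real^'n"
  assumes "x \<noteq> 0"
  shows "(\<lambda>k. cutoff_seq k x) \<longlonglongrightarrow> 1"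
    and "(\<lambda>k. (x \<bullet> x) * cutoff_d1 (real k + 1) (x \<bullet> x)) \<longlonglongrightarrow> 0"
    and "(\<lambda>k. (x \<bullet> x)\<^sup>2 * cutoff_d2 (real k + 1) (x \<bullet> x)) \<longlonglongrightarrow> 0"
proof -
  have c: "filterlim (\<lambda>k. real k + 1) at_top sequentially"
    using filterlim_tendsto_add_at_top[OF tendsto_const filterlim_real_sequentially, of 1]
    by (simp add: add.commute)
  have s: "0 < x \<bullet> x" using assms by simp
  show "(\<lambda>k. cutoff_seq k x) \<longlonglongrightarrow> 1"
    using filterlim_compose[OF cutoff_tendsto(1)[OF s] c] by (simp add: cutoff_seq_def)
  show "(\<lambda>k. (x \<bullet> x) * cutoff_d1 (real k + 1) (x \<bullet> x)) \<longlonglongrightarrow> 0"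
    using filterlim_compose[OF cutoff_tendsto(2)[OF s] c] by simp
  show "(\<lambda>k. (x \<bullet> x)\<^sup>2 * cutoff_d2 (real k + 1) (x \<bullet> x)) \<longlonglongrightarrow> 0"
    using filterlim_compose[OF cutoff_tendsto(3)[OF s] c] by simp
qed

lemma nn_integral_tendsto_0_dominated:
  assumes [measurable]: "\<And>k. f k \<in> borel_measurable M" "g \<in> borel_measurable M"
    and "\<And>k x. f k x \<le> g x" and "(\<integral>\<^sup>+x. ennreal (g x) \<partial>M) < \<infinity>"
    and "AE x in M. (\<lambda>k. f k x) \<longlonglongrightarrow> 0"
  shows "(\<lambda>k. \<integral>\<^sup>+x. ennreal (f k x) \<partial>M) \<longlonglongrightarrow> 0"
proof -
  have "AE x in M. (\<lambda>k. ennreal (f k x)) \<longlonglongrightarrow> ennreal 0"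
    using assms(5) by eventually_elim (rule tendsto_ennrealI)
  then have "(\<lambda>k. \<integral>\<^sup>+x. ennreal (f k x) \<partial>M) \<longlonglongrightarrow> (\<integral>\<^sup>+x. ennreal 0 \<partial>M)"
    using assms(3,4)
    by (intro nn_integral_dominated_convergence[where w = "\<lambda>x. ennreal (g x)"]) (auto intro: ennreal_leI)
  then show ?thesis by simp
qed

lemma cutoff_seq_bounds: "0 \<le> cutoff_seq k x" "cutoff_seq k x \<le> 1"
  unfolding cutoff_seq_def by (simp_all add: cutoff_nonneg cutoff_le_1)

lemma GammaS_cutoff_seq:
  "GammaS A a b (\<lambda>x. cutoff_seq k x - 1) (\<lambda>x. cutoff_seq k x - 1) x
    = 4 * thetaS A a b x * ((x \<bullet> x) * cutoff_d1 (real k + 1) (x \<bullet> x))\<^sup>2"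
  unfolding cutoff_seq_def by (rule GammaS_radial, rule has_real_derivative_cutoff) simp

lemma LS_cutoff_seq:
  fixes A x :: "real^'n"
  assumes "\<forall>i. 0 \<le> A$i" and "x \<in> Rstar A" and "x \<noteq> 0"
  shows "LS A a b (cutoff_seq k) x = thetaS A a b x
    * (2 * ((x \<bullet> x) * cutoff_d1 (real k + 1) (x \<bullet> x)) * (kappaS A a b x + real CARD('n))
       + 4 * ((x \<bullet> x)\<^sup>2 * cutoff_d2 (real k + 1) (x \<bullet> x)))"
proof -
  have "cutoff_seq k = (\<lambda>y::real^'n. cutoff (real k + 1) (y \<bullet> y))"
    by (simp add: fun_eq_iff cutoff_seq_def)
  moreover have "real k + 1 \<noteq> 0" by simp
  ultimately show ?thesis
    by (simp add: LS_radial[OF assms has_real_derivative_cutoff has_real_derivative_cutoff_d1])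
qed

lemma LS_cutoff_seq_factor_bounded:
  fixes A :: "real^'n"
  shows "\<exists>C. \<forall>k x. \<bar>2 * ((x \<bullet> x) * cutoff_d1 (real k + 1) (x \<bullet> x)) * (kappaS A a b x + real CARD('n))
       + 4 * ((x \<bullet> x)\<^sup>2 * cutoff_d2 (real k + 1) (x \<bullet> x))\<bar> \<le> C"
proof -
  obtain B where B: "\<And>c s. 0 < c \<Longrightarrow> 0 \<le> s \<Longrightarrow> \<bar>s * cutoff_d1 c s\<bar> \<le> B \<and> \<bar>s\<^sup>2 * cutoff_d2 c s\<bar> \<le> B"
    using scaled_cutoff_derivs_bounded by blast
  define K where "K = 2 * \<bar>(2 - nS A a b) * alphaS A a b\<bar>
     + \<bar>2 * (1 - alphaS A a b) - b * pS A a b\<bar> + \<bar>\<Sum>i\<in>UNIV. A$i\<bar> + real CARD('n)"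
  have "\<bar>2 * ((x \<bullet> x) * cutoff_d1 (real k + 1) (x \<bullet> x)) * (kappaS A a b x + real CARD('n))
       + 4 * ((x \<bullet> x)\<^sup>2 * cutoff_d2 (real k + 1) (x \<bullet> x))\<bar> \<le> 2 * B * K + 4 * B" for k and x :: "real^'n"
  proof -
    have B1: "\<bar>(x \<bullet> x) * cutoff_d1 (real k + 1) (x \<bullet> x)\<bar> \<le> B"
      and B2: "\<bar>(x \<bullet> x)\<^sup>2 * cutoff_d2 (real k + 1) (x \<bullet> x)\<bar> \<le> B"
      using B[of "real k + 1" "x \<bullet> x"] by simp_all
    have "\<bar>kappaS A a b x + real CARD('n)\<bar> \<le> K"
      using abs_kappaS_le[of A a b x] unfolding K_def by linarith
    from mult_mono'[OF B1 this abs_ge_zero abs_ge_zero]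
    have "\<bar>2 * ((x \<bullet> x) * cutoff_d1 (real k + 1) (x \<bullet> x)) * (kappaS A a b x + real CARD('n))\<bar> \<le> 2 * B * K"
      unfolding abs_mult[of "2 * _"] abs_mult[of 2] by simp
    then show ?thesis using B2 abs_triangle_ineq by (smt (verit, best) abs_mult_pos zero_le_numeral)
  qed
  then show ?thesis by blast
qed

context muS_parameters
begin

lemma nn_integral_one_plus_thetaS_finite:
  assumes "0 \<le> C"
  shows "(\<integral>\<^sup>+x. ennreal (1 + C * thetaS A a b x) \<partial>muS A a b) < \<infinity>"
proof -
  have m: "(\<lambda>x. ennreal (thetaS A a b x ^ m)) \<in> borel_measurable (muS A a b)" for m
    by (rule borel_measurable_muS) measurable
  have m': "(\<lambda>x. ennreal C * ennreal (thetaS A a b x ^ 1)) \<in> borel_measurable (muS A a b)"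
    by (rule borel_measurable_muS) measurable
  have "(\<integral>\<^sup>+x. ennreal (1 + C * thetaS A a b x) \<partial>muS A a b)
      = (\<integral>\<^sup>+x. ennreal (thetaS A a b x ^ 0) + ennreal C * ennreal (thetaS A a b x ^ 1) \<partial>muS A a b)"
    using assms by (intro nn_integral_cong) (simp add: ennreal_plus ennreal_mult thetaS_def)
  also have "\<dots> = (\<integral>\<^sup>+x. ennreal (thetaS A a b x ^ 0) \<partial>muS A a b)
      + ennreal C * (\<integral>\<^sup>+x. ennreal (thetaS A a b x ^ 1) \<partial>muS A a b)"
    unfolding nn_integral_add[OF m m'] nn_integral_cmult[OF m] ..
  also have "\<dots> < \<infinity>"
    using nn_integral_thetaS_power_finite[of 0] nn_integral_thetaS_power_finite[of 1] nS_gt_2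
    by (simp add: ennreal_mult_less_top)
  finally show ?thesis .
qed

lemma H1sq_cutoff_seq_tendsto_0: "(\<lambda>k. H1sq A a b (\<lambda>x. cutoff_seq k x - 1)) \<longlonglongrightarrow> 0"
proof -
  obtain B where B: "\<And>c s. 0 < c \<Longrightarrow> 0 \<le> s \<Longrightarrow> \<bar>s * cutoff_d1 c s\<bar> \<le> B"
    using scaled_cutoff_derivs_bounded by blast
  define u where "u k x = (cutoff_seq k x - 1)\<^sup>2
      + 4 * thetaS A a b x * ((x \<bullet> x) * cutoff_d1 (real k + 1) (x \<bullet> x))\<^sup>2" for k x
  have "(\<lambda>k. \<integral>\<^sup>+x. ennreal (u k x) \<partial>muS A a b) \<longlonglongrightarrow> 0"
  proof (rule nn_integral_tendsto_0_dominated)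
    show "u k \<in> borel_measurable (muS A a b)" for k
      by (rule borel_measurable_muS) (simp add: u_def[abs_def])
    show "(\<lambda>x. 1 + 4 * B\<^sup>2 * thetaS A a b x) \<in> borel_measurable (muS A a b)"
      by (rule borel_measurable_muS) simp
    show "(\<integral>\<^sup>+x. ennreal (1 + 4 * B\<^sup>2 * thetaS A a b x) \<partial>muS A a b) < \<infinity>"
      by (rule nn_integral_one_plus_thetaS_finite) simp
    show "u k x \<le> 1 + 4 * B\<^sup>2 * thetaS A a b x" for k x
    proof -
      have sq: "(cutoff_seq k x - 1)\<^sup>2 \<le> 1"
        using cutoff_seq_bounds[of k x] by (simp add: abs_square_le_1)
      have "\<bar>(x \<bullet> x) * cutoff_d1 (real k + 1) (x \<bullet> x)\<bar> \<le> B" by (rule B) simp_all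
      from power_mono[OF this abs_ge_zero, of 2]
      have "((x \<bullet> x) * cutoff_d1 (real k + 1) (x \<bullet> x))\<^sup>2 \<le> B\<^sup>2" by simp
      moreover have "0 \<le> 4 * thetaS A a b x" by (simp add: thetaS_def)
      ultimately have "4 * thetaS A a b x * ((x \<bullet> x) * cutoff_d1 (real k + 1) (x \<bullet> x))\<^sup>2
          \<le> 4 * thetaS A a b x * B\<^sup>2"
        by (rule mult_left_mono)
      with sq show ?thesis unfolding u_def by (simp only: ac_simps)
    qed
    show "AE x in muS A a b. (\<lambda>k. u k x) \<longlonglongrightarrow> 0"
      using AE_muS
    proof eventually_elim
      case (elim x)
      then have "(\<lambda>k. u k x) \<longlonglongrightarrow> (1 - 1)\<^sup>2 + 4 * thetaS A a b x * 0\<^sup>2"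
        unfolding u_def by (intro tendsto_intros cutoff_seq_tendsto) auto
      then show ?case by simp
    qed
  qed
  then show ?thesis by (simp add: H1sq_def u_def GammaS_cutoff_seq)
qed

lemma LS_cutoff_seq_tendsto_0:
  assumes n4: "4 < nS A a b"
  shows "(\<lambda>k. \<integral>\<^sup>+x. ennreal ((LS A a b (cutoff_seq k) x)\<^sup>2) \<partial>muS A a b) \<longlonglongrightarrow> 0"
proof -
  define r where "r k x = 2 * ((x \<bullet> x) * cutoff_d1 (real k + 1) (x \<bullet> x)) * (kappaS A a b x + real CARD('n))
      + 4 * ((x \<bullet> x)\<^sup>2 * cutoff_d2 (real k + 1) (x \<bullet> x))" for k and x :: "real^'n"
  obtain C where C: "\<And>k x. \<bar>r k x\<bar> \<le> C"
    using LS_cutoff_seq_factor_bounded[of A a b] unfolding r_def by blast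
  have "AE x in muS A a b. \<forall>k. LS A a b (cutoff_seq k) x = thetaS A a b x * r k x"
    using AE_muS by eventually_elim (simp add: r_def LS_cutoff_seq[OF weights_nonneg])
  then have "(\<integral>\<^sup>+x. ennreal ((LS A a b (cutoff_seq k) x)\<^sup>2) \<partial>muS A a b)
      = (\<integral>\<^sup>+x. ennreal ((thetaS A a b x * r k x)\<^sup>2) \<partial>muS A a b)" for k
    by (intro nn_integral_cong_AE) (auto elim: eventually_mono)
  moreover have "(\<lambda>k. \<integral>\<^sup>+x. ennreal ((thetaS A a b x * r k x)\<^sup>2) \<partial>muS A a b) \<longlonglongrightarrow> 0"
  proof (rule nn_integral_tendsto_0_dominated)
    show "(\<lambda>x. (thetaS A a b x * r k x)\<^sup>2) \<in> borel_measurable (muS A a b)" for k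
      by (rule borel_measurable_muS) (simp add: r_def[abs_def])
    show "(\<lambda>x. C\<^sup>2 * thetaS A a b x ^ 2) \<in> borel_measurable (muS A a b)"
      by (rule borel_measurable_muS) simp
    show "(thetaS A a b x * r k x)\<^sup>2 \<le> C\<^sup>2 * thetaS A a b x ^ 2" for k x
    proof -
      have "(r k x)\<^sup>2 \<le> C\<^sup>2" using power_mono[OF C[of k x] abs_ge_zero, of 2] by simp
      from mult_right_mono[OF this zero_le_power2[of "thetaS A a b x"]]
      show ?thesis by (simp add: power_mult_distrib mult.commute)
    qed
    have "(\<integral>\<^sup>+x. ennreal (C\<^sup>2 * thetaS A a b x ^ 2) \<partial>muS A a b)
        = ennreal (C\<^sup>2) * (\<integral>\<^sup>+x. ennreal (thetaS A a b x ^ 2) \<partial>muS A a b)"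
      by (simp add: ennreal_mult nn_integral_cmult[OF borel_measurable_muS] thetaS_def)
    also have "\<dots> < \<infinity>"
      using nn_integral_thetaS_power_finite[of 2] n4 by (simp add: ennreal_mult_less_top)
    finally show "(\<integral>\<^sup>+x. ennreal (C\<^sup>2 * thetaS A a b x ^ 2) \<partial>muS A a b) < \<infinity>" .
    show "AE x in muS A a b. (\<lambda>k. (thetaS A a b x * r k x)\<^sup>2) \<longlonglongrightarrow> 0"
      using AE_muS
    proof eventually_elim
      case (elim x)
      then have "(\<lambda>k. (thetaS A a b x * r k x)\<^sup>2)
          \<longlonglongrightarrow> (thetaS A a b x * (2 * 0 * (kappaS A a b x + real CARD('n)) + 4 * 0))\<^sup>2"
        unfolding r_def by (intro tendsto_intros cutoff_seq_tendsto) auto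
      then show ?case by simp
    qed
  qed
  ultimately show ?thesis by simp
qed

end

theorem mainTheorem5:
  fixes A :: "real^'n" and a b :: real and j :: 'n
  assumes "CARD('n) \<ge> 2"
    and "\<forall>i. 0 \<le> A$i"
    and "A$j = 0"
    and "0 \<le> b - a" and "b - a < 1"
    and "a < (DD A - 2) / 2"
  shows "(nS A a b > 2 \<longrightarrow>
            H10 A a b (\<lambda>x. 1) \<and> (\<forall>x. GammaS A a b (\<lambda>x. 1) (\<lambda>x. 1) x = 0))
       \<and> (nS A a b > 4 \<longrightarrow>
            (\<exists>\<zeta>. (\<forall>k. \<zeta> k \<in> A0)
                \<and> (\<lambda>k. H1sq A a b (\<lambda>x. \<zeta> k x - 1)) \<longlonglongrightarrow> 0
                \<and> (\<lambda>k. \<integral>\<^sup>+ x. ennreal ((LS A a b (\<zeta> k) x)^2) \<partial>muS A a b) \<longlonglongrightarrow> 0))"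
proof (intro conjI impI)
  assume "nS A a b > 2"
  then interpret muS_parameters A a b
    using assms by unfold_locales auto
  show "H10 A a b (\<lambda>x. 1)"
    unfolding H10_def using cutoff_seq_in_A0 H1sq_cutoff_seq_tendsto_0 by blast
  show "\<forall>x. GammaS A a b (\<lambda>x. 1) (\<lambda>x. 1) x = 0"
    by (simp add: GammaS_const)
next
  assume n4: "nS A a b > 4"
  then interpret muS_parameters A a b
    using assms by unfold_locales auto
  show "\<exists>\<zeta>. (\<forall>k. \<zeta> k \<in> A0)
      \<and> (\<lambda>k. H1sq A a b (\<lambda>x. \<zeta> k x - 1)) \<longlonglongrightarrow> 0
      \<and> (\<lambda>k. \<integral>\<^sup>+ x. ennreal ((LS A a b (\<zeta> k) x)^2) \<partial>muS A a b) \<longlonglongrightarrow> 0"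
    using cutoff_seq_in_A0 H1sq_cutoff_seq_tendsto_0 LS_cutoff_seq_tendsto_0[OF n4] by blast
qed

end
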